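(* Let $n\ge 1$ be an integer, $K\in\mathbb Z$ and $\rho\in\mathbb C$. For $t\in\mathbb C$ and $j=0,1,2,\dots$ set $$\mu_j(t):=\oint_{|z|=R} z^{j}\,z^{K}\Big(1-\frac1z\Big)^{\rho}e^{t/z}\,dz ,\qquad \tau_n(t):=\det\big[\mu_{a+b-2}(t)\big]_{a,b=1}^{n},$$ where $R>1$ is arbitrary. Then $\tau_n(t)$ is a polynomial in $t$. Moreover, for every $t$ with $\tau_n(t)\neq 0$, let $Y_n(z;t)$ be the (unique) solution of the Riemann–Hilbert problem described in the context, and write $Y_n'(0;t)=\partial_z Y_n(z;t)|_{z=0}$. Then $$H_V:=-\tfrac12\,\mathrm{tr}\big(Y_n(0;t)^{-1}Y_n'(0;t)\,\sigma_3\big)+\frac{\rho}{2} =-\big(Y_n(0;t)^{-1}Y_n'(0;t)\big)_{11}+\frac{\rho}{2}=\frac{d}{dt}\ln\tau_n(t)+\frac{\rho}{2},$$ where $\sigma_3=\mathrm{diag}(1,-1)$.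
   Context: Here $(1-1/z)^\rho$ is the principal branch, so that $e^{\theta(z)}:=z^{K}(1-1/z)^{\rho}e^{t/z}$ is analytic on $\mathbb C\setminus[0,1]$; the value of $\mu_j$ does not depend on $R>1$. The Riemann–Hilbert problem: find a $2\times2$ matrix function $Y_n(z)=Y_n(z;t)$ such that $Y_n$ and $Y_n^{-1}$ are holomorphic and bounded in $\mathbb C\setminus\gamma$, where $\gamma=\{|z|=R\}$ is oriented counterclockwise; the boundary values satisfy $Y_n(z_+)=Y_n(z_-)\begin{bmatrix}1&e^{\theta(z)}\\0&1\end{bmatrix}$ for $z\in\gamma$, where $z_+$ (resp. $z_-$) denotes the boundary value from the left (inside) (resp. right (outside)) of $\gamma$; and $Y_n(z)=\big(\mathbf 1+O(z^{-1})\big)z^{n\sigma_3}$ as $z\to\infty$. It is known (Fokas–Its–Kitaev) that this problem has a solution iff $\tau_n(t)\ne0$, in which case the solution is unique, satisfies $\det Y_n\equiv1$, and is analytic at $z=0$ (which lies inside $\gamma$). *)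

theory Defs
  imports "HOL-Complex_Analysis.Complex_Analysis" "Jordan_Normal_Form.Determinant"
begin

definition weight :: "int \<Rightarrow> complex \<Rightarrow> complex \<Rightarrow> complex \<Rightarrow> complex" where
  "weight K \<rho> t z = z powi K * (1 - 1/z) powr \<rho> * exp (t / z)"

definition mu :: "int \<Rightarrow> complex \<Rightarrow> real \<Rightarrow> nat \<Rightarrow> complex \<Rightarrow> complex" where
  "mu K \<rho> R j t = contour_integral (circlepath 0 R) (\<lambda>z. z ^ j * weight K \<rho> t z)"

text \<open>Hankel determinant tau_n(t) = det [mu_(a+b-2)(t)]_(a,b=1..n) (0-based indices here).\<close>
definition tau :: "int \<Rightarrow> complex \<Rightarrow> real \<Rightarrow> nat \<Rightarrow> complex \<Rightarrow> complex" where
  "tau K \<rho> R n t = Determinant.det (mat n n (\<lambda>(a, b). mu K \<rho> R (a + b) t))"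

definition jump_mat :: "int \<Rightarrow> complex \<Rightarrow> complex \<Rightarrow> complex \<Rightarrow> complex mat" where
  "jump_mat K \<rho> t z = mat 2 2 (\<lambda>(i, j). if i = j then 1 else if i = 0 \<and> j = 1 then weight K \<rho> t z else 0)"

definition zpow_sigma3 :: "nat \<Rightarrow> complex \<Rightarrow> complex mat" where
  "zpow_sigma3 n z = mat 2 2 (\<lambda>(i, j). if i = j then (if i = 0 then z ^ n else inverse z ^ n) else 0)"

definition sigma3 :: "complex mat" where
  "sigma3 = mat 2 2 (\<lambda>(i, j). if i = j then (if i = 0 then 1 else -1) else 0)"

definition mat_trace :: "complex mat \<Rightarrow> complex" where
  "mat_trace A = (\<Sum>i<dim_row A. A $$ (i, i))"

definition good_off_circle :: "real \<Rightarrow> (complex \<Rightarrow> complex) \<Rightarrow> bool" where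
  "good_off_circle R f \<longleftrightarrow>
     f holomorphic_on ball 0 R \<and> f holomorphic_on (- cball 0 R) \<and>
     (\<forall>B. bounded B \<longrightarrow> bounded (f ` (B - sphere 0 R)))"

definition RHP_solution :: "int \<Rightarrow> complex \<Rightarrow> real \<Rightarrow> nat \<Rightarrow> complex \<Rightarrow> (complex \<Rightarrow> complex mat) \<Rightarrow> bool" where
  "RHP_solution K \<rho> R n t Y \<longleftrightarrow>
     (\<forall>z. Y z \<in> carrier_mat 2 2) \<and>
     (\<forall>i<2. \<forall>j<2. good_off_circle R (\<lambda>z. Y z $$ (i, j))) \<and>
     (\<exists>Yi. (\<forall>z. Yi z \<in> carrier_mat 2 2) \<and>
           (\<forall>z. norm z \<noteq> R \<longrightarrow> Y z * Yi z = 1\<^sub>m 2 \<and> Yi z * Y z = 1\<^sub>m 2) \<and>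
           (\<forall>i<2. \<forall>j<2. good_off_circle R (\<lambda>z. Yi z $$ (i, j)))) \<and>
     (\<exists>Yp Ym. \<forall>z \<in> sphere 0 R.
        Yp z \<in> carrier_mat 2 2 \<and> Ym z \<in> carrier_mat 2 2 \<and>
        (\<forall>i<2. \<forall>j<2.
           ((\<lambda>w. Y w $$ (i, j)) \<longlongrightarrow> Yp z $$ (i, j)) (at z within ball 0 R) \<and>
           ((\<lambda>w. Y w $$ (i, j)) \<longlongrightarrow> Ym z $$ (i, j)) (at z within - cball 0 R)) \<and>
        Yp z = Ym z * jump_mat K \<rho> t z) \<and>
     (\<exists>C r. \<forall>z. norm z > r \<longrightarrow>
        (\<forall>i<2. \<forall>j<2.
           norm ((Y z * zpow_sigma3 n (inverse z)) $$ (i, j) - (if i = j then 1 else 0)) \<le> C / norm z))"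

end

theory Submission
  imports Defs "Jordan_Normal_Form.Char_Poly"
begin

text \<open>Extend the moments to all integer indices l, \<open>moment l t = \<oint> z^l e^\<theta>(z) dz\<close>.
  Truncating the exponential series of \<open>e^(t/z)\<close> leaves an integrand that is \<open>O(z^-2)\<close> at
  infinity, so every moment is a polynomial in t, and the derivative in t lowers the index by
  one.  By Jacobi's formula the derivative of \<open>\<tau>\<^sub>n\<close> is therefore the Hankel determinant with
  its first row replaced by the moments of index \<open>j - 1\<close>.

  On the Riemann--Hilbert side, the first column of Y has no jump, so Cauchy's formula for the
  boundary values together with the normalisation at infinity shows that it consists of
  polynomials \<open>P = Y\<^sub>1\<^sub>1\<close> and \<open>Q = Y\<^sub>2\<^sub>1\<close> of degree at most n.  Integrating the jump of the
  second column against \<open>z^k\<close> and \<open>1/z\<close> gives the orthogonality relations of P and Q and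
  expresses \<open>Y\<^sub>1\<^sub>2(0)\<close>, \<open>Y\<^sub>2\<^sub>2(0)\<close> through moments; the same argument applied to \<open>det Y\<close> gives
  \<open>det Y(0) = 1\<close> and \<open>(det Y)'(0) = 0\<close>.  The coefficients of \<open>(Q(0) P(z) - P(0) Q(z)) / z\<close>
  solve the Hankel system with right-hand side \<open>-2\<pi>i e\<^sub>0\<close>, and Cramer's rule identifies the
  shifted determinant with \<open>-(Y(0)\<^sup>-\<^sup>1 Y'(0))\<^sub>1\<^sub>1 \<tau>\<^sub>n\<close>.  The trace identity holds because
  \<open>tr(Y\<^sup>-\<^sup>1 Y') = (det Y)' / det Y\<close> vanishes at 0.\<close>

section \<open>Contour integrals over circles around the origin\<close>

lemma contour_integral_circlepath_annulus_eq:
  assumes "f holomorphic_on {z. a < norm z}" and "0 \<le> a" "a < r1" "a < r2"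
  shows "contour_integral (circlepath 0 r1) f = contour_integral (circlepath 0 r2) f"
proof (rule Cauchy_theorem_homotopic_loops[OF _ _ assms(1)])
  show "open {z::complex. a < norm z}"
    by (intro open_Collect_less continuous_intros)
  show "homotopic_loops {z. a < norm z} (circlepath 0 r1) (circlepath 0 r2)"
  proof (rule homotopic_loops_linear)
    fix t :: real
    define e where "e = exp (2 * of_real pi * \<i> * of_real t)"
    have norm_e: "norm e = 1" unfolding e_def by (simp add: norm_exp_eq_Re)
    show "closed_segment (circlepath 0 r1 t) (circlepath 0 r2 t) \<subseteq> {z. a < norm z}"
    proof
      fix x assume "x \<in> closed_segment (circlepath 0 r1 t) (circlepath 0 r2 t)"
      then obtain u where u: "0 \<le> u" "u \<le> 1" and x: "x = (1 - u) *\<^sub>R (r1 * e) + u *\<^sub>R (r2 * e)"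
        unfolding closed_segment_def circlepath e_def by auto
      have "(1 - u) * min r1 r2 + u * min r1 r2 \<le> (1 - u) * r1 + u * r2"
        using u by (intro add_mono mult_left_mono) auto
      then have ge: "min r1 r2 \<le> (1 - u) * r1 + u * r2" by (simp add: algebra_simps)
      have "x = of_real ((1 - u) * r1 + u * r2) * e"
        unfolding x by (simp add: scaleR_conv_of_real algebra_simps)
      then have "norm x = \<bar>(1 - u) * r1 + u * r2\<bar>"
        using norm_e by (simp only: norm_mult norm_of_real mult_1_right)
      then show "x \<in> {z. a < norm z}" using ge assms(2-4) by simp
    qed
  qed auto
qed auto

text \<open>Residue at infinity: only the coefficient of \<open>1/z\<close> survives in the integral.\<close>

lemma has_contour_integral_circlepath_at_infinity:
  assumes hol: "f holomorphic_on {z. a < norm z}" and a: "0 \<le> a" "a < r"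
    and decay: "\<And>z. r0 \<le> norm z \<Longrightarrow> norm (f z - c / z) \<le> M / norm z ^ 2"
  shows "(f has_contour_integral (2 * pi * \<i> * c)) (circlepath 0 r)"
proof -
  have integrable: "f contour_integrable_on circlepath 0 s" if "a < s" for s
    by (rule contour_integrable_continuous_circlepath
        [OF continuous_on_subset[OF holomorphic_on_imp_continuous_on[OF hol]]])
       (use that a in auto)
  define I where "I = contour_integral (circlepath 0 r) f"
  have bound: "norm (I - 2 * pi * \<i> * c) \<le> 2 * pi * M / s" if s: "max r0 (a + 1) \<le> s" for s
  proof -
    have "a < s" "0 < s" using s a by auto
    have "I = contour_integral (circlepath 0 s) f"
      unfolding I_def by (rule contour_integral_circlepath_annulus_eq[OF hol a \<open>a < s\<close>])
    then have "(f has_contour_integral I) (circlepath 0 s)"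
      using has_contour_integral_integral[OF integrable[OF \<open>a < s\<close>]] by simp
    moreover have "((\<lambda>z. c / (z - 0)) has_contour_integral (2 * of_real pi * \<i> * c)) (circlepath 0 s)"
      by (rule Cauchy_integral_circlepath_simple[where f="\<lambda>_. c"]) (use \<open>0 < s\<close> in auto)
    ultimately have "((\<lambda>z. f z - c / (z - 0)) has_contour_integral (I - 2 * of_real pi * \<i> * c))
        (circlepath 0 s)"
      by (rule has_contour_integral_diff)
    moreover have "0 \<le> M / s ^ 2"
      using decay[of "of_real s"] s order_trans[OF norm_ge_zero] by fastforce
    ultimately have "norm (I - 2 * of_real pi * \<i> * c) \<le> M / s ^ 2 * (2 * pi * s)"
    proof (rule has_contour_integral_bound_circlepath)
      fix z :: complex assume "norm (z - 0) = s"
      then show "norm (f z - c / (z - 0)) \<le> M / s ^ 2" using decay[of z] s by simp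
    qed (rule \<open>0 < s\<close>)
    also have "\<dots> = 2 * pi * M / s" using \<open>0 < s\<close> by (simp add: power2_eq_square field_simps)
    finally show ?thesis by simp
  qed
  have "norm (I - 2 * pi * \<i> * c) \<le> 0"
  proof (rule tendsto_le[OF trivial_limit_at_top_linorder])
    show "((\<lambda>s. 2 * pi * M / s) \<longlongrightarrow> 0) at_top"
      by (intro tendsto_divide_0[OF tendsto_const] filterlim_at_top_imp_at_infinity filterlim_ident)
    show "\<forall>\<^sub>F s in at_top. norm (I - 2 * pi * \<i> * c) \<le> 2 * pi * M / s"
      by (rule eventually_mono[OF eventually_ge_at_top[of "max r0 (a + 1)"]]) (rule bound)
  qed simp
  then show ?thesis
    using has_contour_integral_integral[OF integrable[OF a(2)]] unfolding I_def by simp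
qed

lemma has_contour_integral_circlepath_radius_limit:
  fixes G Gb :: "complex \<Rightarrow> complex" and r :: "nat \<Rightarrow> real"
  assumes int: "\<And>k. (G has_contour_integral L) (circlepath 0 (r k))"
    and lim: "r \<longlonglongrightarrow> R" and R: "R > 0" and r: "\<And>k. r k \<noteq> R" "\<And>k. r k > 0"
    and S: "\<And>k. sphere 0 (r k) \<subseteq> S"
    and boundary: "\<And>z. z \<in> sphere 0 R \<Longrightarrow> (G \<longlongrightarrow> Gb z) (at z within S)"
    and bound: "\<And>k z. z \<in> sphere 0 (r k) \<Longrightarrow> norm (G z) \<le> B"
  shows "(Gb has_contour_integral L) (circlepath 0 R)"
proof -
  define e where "e x = exp (2 * of_real pi * \<i> * of_real x)" for x :: real
  have norm_e: "norm (e x) = 1" for x unfolding e_def by (simp add: norm_exp_eq_Re)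
  have circ: "circlepath 0 s x = of_real s * e x" for s x unfolding circlepath e_def by simp
  have vd: "vector_derivative (circlepath 0 s) (at x) = 2 * pi * \<i> * s * e x" for s x
    unfolding vector_derivative_circlepath e_def by simp
  obtain Rb where Rb: "\<And>k. norm (r k) \<le> Rb"
    using convergent_imp_Bseq[OF convergentI[OF lim]] by (auto simp: Bseq_def)
  have B: "B \<ge> 0"
    using bound[of "of_real (r 0)" 0] r(2)[of 0] order_trans[OF norm_ge_zero] by simp
  define \<phi> where "\<phi> k x = G (circlepath 0 (r k) x) * vector_derivative (circlepath 0 (r k)) (at x)" for k x
  define g where "g x = Gb (circlepath 0 R x) * vector_derivative (circlepath 0 R) (at x)" for x
  have \<phi>: "(\<phi> k has_integral L) {0..1}" for k
    using int[of k] unfolding has_contour_integral \<phi>_def .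
  have conv: "(\<lambda>k. \<phi> k x) \<longlonglongrightarrow> g x" for x
  proof -
    have "of_real (r k) * e x \<in> S - {of_real R * e x}" for k
      using r[of k] norm_e[of x] S[of k] by (auto simp: norm_mult)
    moreover have "(\<lambda>k. of_real (r k) * e x) \<longlonglongrightarrow> of_real R * e x"
      by (intro tendsto_intros lim)
    ultimately have "filterlim (\<lambda>k. of_real (r k) * e x) (at (of_real R * e x) within S) sequentially"
      unfolding filterlim_at by (simp add: always_eventually)
    moreover have "of_real R * e x \<in> sphere 0 R" using R norm_e[of x] by (simp add: norm_mult)
    ultimately have "(\<lambda>k. G (of_real (r k) * e x)) \<longlonglongrightarrow> Gb (of_real R * e x)"
      using filterlim_compose[OF boundary] by blast
    then have "(\<lambda>k. G (of_real (r k) * e x) * (2 * pi * \<i> * r k * e x))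
        \<longlonglongrightarrow> Gb (of_real R * e x) * (2 * pi * \<i> * R * e x)"
      by (intro tendsto_intros lim)
    then show ?thesis unfolding \<phi>_def g_def circ vd .
  qed
  have dominated: "norm (\<phi> k x) \<le> B * (2 * pi * Rb)" for k x
  proof -
    have "norm (G (circlepath 0 (r k) x)) \<le> B"
      using bound[of "circlepath 0 (r k) x" k] r(2)[of k] norm_e[of x] by (simp add: circ norm_mult)
    moreover have "norm (vector_derivative (circlepath 0 (r k)) (at x)) \<le> 2 * pi * Rb"
      using Rb[of k] r(2)[of k] norm_e[of x] by (simp add: vd norm_mult)
    ultimately show ?thesis unfolding \<phi>_def norm_mult using B by (intro mult_mono) auto
  qed
  have "g integrable_on {0..1}" "(\<lambda>k. integral {0..1} (\<phi> k)) \<longlonglongrightarrow> integral {0..1} g"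
    using dominated_convergence[of \<phi> "{0..1}" "\<lambda>_. B * (2 * pi * Rb)" g] \<phi> dominated conv
    by (auto intro: has_integral_integrable)
  moreover have "integral {0..1} (\<phi> k) = L" for k using \<phi> by (rule integral_unique)
  ultimately have "integral {0..1} g = L" by (simp add: LIMSEQ_const_iff)
  then have "(g has_integral L) {0..1}"
    using \<open>g integrable_on {0..1}\<close> by (metis has_integral_integral)
  then show ?thesis unfolding has_contour_integral g_def .
qed

lemma has_contour_integral_inside_boundary_values:
  assumes hol: "f holomorphic_on ball 0 R" and R: "R > 0"
    and bound: "\<And>z. z \<in> ball 0 R \<Longrightarrow> norm (f z) \<le> B"
    and boundary: "\<And>z. z \<in> sphere 0 R \<Longrightarrow> (f \<longlongrightarrow> fb z) (at z within ball 0 R)"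
  shows "((\<lambda>s. fb s / s ^ Suc m) has_contour_integral (2 * pi * \<i> / fact m * (deriv ^^ m) f 0))
    (circlepath 0 R)"
proof -
  define r where "r k = R - R / (2 + real k)" for k
  have r: "R / 2 \<le> r k" "r k < R" for k
  proof -
    have "R / (2 + real k) \<le> R / 2" using R by (intro divide_left_mono) auto
    moreover have "0 < R / (2 + real k)" using R by simp
    ultimately show "R / 2 \<le> r k" "r k < R" unfolding r_def by linarith+
  qed
  have "(\<lambda>k. R / (2 + real k)) \<longlonglongrightarrow> 0"
    by (intro tendsto_divide_0[OF tendsto_const] filterlim_at_top_imp_at_infinity
        filterlim_tendsto_add_at_top[OF tendsto_const filterlim_real_sequentially])
  then have "r \<longlonglongrightarrow> R - 0"
    unfolding r_def by (intro tendsto_intros)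
  moreover have "norm (f z / z ^ Suc m) \<le> B / (R / 2) ^ Suc m" if "z \<in> sphere 0 (r k)" for k z
  proof -
    have z: "z \<in> ball 0 R" "R / 2 \<le> norm z" using that r[of k] by auto
    have "norm (f z) / norm z ^ Suc m \<le> B / (R / 2) ^ Suc m"
      using bound[OF z(1)] order_trans[OF norm_ge_zero bound[OF z(1)]] z R
      by (intro frac_le power_mono) auto
    then show ?thesis by (simp add: norm_divide norm_mult norm_power)
  qed
  ultimately show ?thesis
  proof (intro has_contour_integral_circlepath_radius_limit[where r = r and R = R and
        S = "ball 0 R - ball 0 (R / 2)" and B = "B / (R / 2) ^ Suc m"])
    fix k
    have "cball 0 (r k) \<subseteq> ball 0 R" using r[of k] by auto
    then have "continuous_on (cball 0 (r k)) f" "f holomorphic_on ball 0 (r k)"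
      using holomorphic_on_subset[OF hol] holomorphic_on_imp_continuous_on by (blast, force)
    then show "((\<lambda>s. f s / s ^ Suc m) has_contour_integral (2 * pi * \<i> / fact m * (deriv ^^ m) f 0))
        (circlepath 0 (r k))"
      using Cauchy_has_contour_integral_higher_derivative_circlepath[of 0 "r k" f 0 m] r[of k] R
      by simp
  next
    fix z :: complex assume z: "z \<in> sphere 0 R"
    then have "((\<lambda>s. f s / s ^ Suc m) \<longlongrightarrow> fb z / z ^ Suc m) (at z within ball 0 R)"
      using R by (intro tendsto_intros boundary) auto
    then show "((\<lambda>s. f s / s ^ Suc m) \<longlongrightarrow> fb z / z ^ Suc m) (at z within ball 0 R - ball 0 (R / 2))"
      by (rule tendsto_within_subset) auto
  next
    show "0 < r k" "r k \<noteq> R" "sphere 0 (r k) \<subseteq> ball 0 R - ball 0 (R / 2)" for k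
      using r[of k] R by auto
  qed (use R in auto)
qed

lemma has_contour_integral_inside_boundary_values_zero:
  assumes hol: "f holomorphic_on ball 0 R" and R: "R > 0"
    and bound: "\<And>z. z \<in> ball 0 R \<Longrightarrow> norm (f z) \<le> B"
    and boundary: "\<And>z. z \<in> sphere 0 R \<Longrightarrow> (f \<longlongrightarrow> fb z) (at z within ball 0 R)"
  shows "((\<lambda>s. fb s * s ^ k) has_contour_integral 0) (circlepath 0 R)"
proof -
  have "((\<lambda>s. fb s * s ^ Suc k / s ^ Suc 0) has_contour_integral
      (2 * pi * \<i> / fact 0 * (deriv ^^ 0) (\<lambda>s. f s * s ^ Suc k) 0)) (circlepath 0 R)"
  proof (rule has_contour_integral_inside_boundary_values[where B = "B * R ^ Suc k"])
    show "(\<lambda>s. f s * s ^ Suc k) holomorphic_on ball 0 R"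
      by (intro holomorphic_intros hol)
    show "((\<lambda>s. f s * s ^ Suc k) \<longlongrightarrow> fb z * z ^ Suc k) (at z within ball 0 R)"
      if "z \<in> sphere 0 R" for z
      using that by (intro tendsto_mult tendsto_power tendsto_ident_at boundary)
    show "norm (f z * z ^ Suc k) \<le> B * R ^ Suc k" if z: "z \<in> ball 0 R" for z
      using bound[OF z] order_trans[OF norm_ge_zero bound[OF z]] R z
      by (auto simp: norm_mult norm_power intro!: mult_mono power_mono)
  qed (rule R)
  then have "((\<lambda>s. fb s * s ^ Suc k / s ^ Suc 0) has_contour_integral 0) (circlepath 0 R)"
    by simp
  then show ?thesis
    by (rule has_contour_integral_eq) (use R in auto)
qed

lemma has_contour_integral_outside_boundary_values:
  assumes hol: "G holomorphic_on - cball 0 R" and R: "R > 0"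
    and bound: "\<And>z. R < norm z \<Longrightarrow> norm z \<le> R + 1 \<Longrightarrow> norm (G z) \<le> B"
    and boundary: "\<And>z. z \<in> sphere 0 R \<Longrightarrow> (G \<longlongrightarrow> Gb z) (at z within - cball 0 R)"
    and decay: "\<And>z. r0 \<le> norm z \<Longrightarrow> norm (G z - c / z) \<le> M / norm z ^ 2"
  shows "(Gb has_contour_integral (2 * pi * \<i> * c)) (circlepath 0 R)"
proof -
  have hol': "G holomorphic_on {z. R < norm z}"
    by (rule holomorphic_on_subset[OF hol]) auto
  define r where "r k = R + inverse (real (Suc k))" for k
  have r: "R < r k" "r k \<le> R + 1" for k
    by (auto simp: r_def field_simps)
  show ?thesis
  proof (rule has_contour_integral_circlepath_radius_limit[where r = r and S = "- cball 0 R" and B = B])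
    show "(G has_contour_integral 2 * pi * \<i> * c) (circlepath 0 (r k))" for k
      by (rule has_contour_integral_circlepath_at_infinity[OF hol' _ r(1) decay]) (use R in auto)
    show "r \<longlonglongrightarrow> R" unfolding r_def by (rule LIMSEQ_inverse_real_of_nat_add)
    show "0 < r k" "r k \<noteq> R" "sphere 0 (r k) \<subseteq> - cball 0 R" for k
      using r(1)[of k] R by auto
    show "norm (G z) \<le> B" if "z \<in> sphere 0 (r k)" for k z
      using that r[of k] by (intro bound) auto
  qed (use boundary R in auto)
qed

lemma has_contour_integral_outside_boundary_values_mult:
  assumes hol: "f holomorphic_on - cball 0 R" and R: "R > 0"
    and bound: "\<And>z. R < norm z \<Longrightarrow> norm z \<le> R + 1 \<Longrightarrow> norm (f z) \<le> B"
    and boundary: "\<And>z. z \<in> sphere 0 R \<Longrightarrow> (f \<longlongrightarrow> fb z) (at z within - cball 0 R)"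
    and h: "h holomorphic_on - {0}"
    and decay: "\<And>z. r0 \<le> norm z \<Longrightarrow> norm (f z * h z - c / z) \<le> M / norm z ^ 2"
  shows "((\<lambda>s. fb s * h s) has_contour_integral (2 * pi * \<i> * c)) (circlepath 0 R)"
proof -
  have "compact (h ` (cball 0 (R + 1) - ball 0 R))"
    by (intro compact_continuous_image compact_diff continuous_on_subset
        [OF holomorphic_on_imp_continuous_on[OF h]]) (use R in auto)
  then obtain Bh where Bh: "\<forall>y \<in> h ` (cball 0 (R + 1) - ball 0 R). norm y \<le> Bh"
    by (meson bounded_iff compact_imp_bounded)
  show ?thesis
  proof (rule has_contour_integral_outside_boundary_values[where B = "B * Bh"])
    show "(\<lambda>s. f s * h s) holomorphic_on - cball 0 R"
      using holomorphic_on_subset[OF h, of "- cball 0 R"] R by (intro holomorphic_intros hol) auto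
    fix z :: complex assume z: "R < norm z" "norm z \<le> R + 1"
    then show "norm (f z * h z) \<le> B * Bh"
      unfolding norm_mult using bound[OF z] Bh z order_trans[OF norm_ge_zero bound[OF z]]
      by (intro mult_mono) auto
  next
    fix z :: complex assume z: "z \<in> sphere 0 R"
    then have "isCont h z"
      using R by (intro holomorphic_on_imp_continuous_on[OF h, THEN continuous_on_interior])
        (auto simp: interior_open open_Compl)
    then have "(h \<longlongrightarrow> h z) (at z within - cball 0 R)"
      using continuous_at_imp_continuous_at_within by (auto simp: continuous_within)
    then show "((\<lambda>s. f s * h s) \<longlongrightarrow> fb z * h z) (at z within - cball 0 R)"
      by (intro tendsto_mult boundary z)
  qed (use R decay in auto)
qed

text \<open>Cauchy's formula from inside and the expansion at infinity from outside compute the same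
  integral of \<open>g(s) / s\<^sup>k\<^sup>+\<^sup>1\<close>.\<close>

lemma Taylor_coeff_eq_coeff_at_infinity:
  assumes inside: "f holomorphic_on ball 0 R" and outside: "f holomorphic_on - cball 0 R"
    and R: "R > 0"
    and bound: "\<And>z. norm z \<le> R + 1 \<Longrightarrow> norm z \<noteq> R \<Longrightarrow> norm (f z) \<le> B"
    and from_inside: "\<And>z. z \<in> sphere 0 R \<Longrightarrow> (f \<longlongrightarrow> g z) (at z within ball 0 R)"
    and from_outside: "\<And>z. z \<in> sphere 0 R \<Longrightarrow> (f \<longlongrightarrow> g z) (at z within - cball 0 R)"
    and decay: "\<And>z. r0 \<le> norm z \<Longrightarrow> norm (f z / z ^ Suc k - c / z) \<le> M / norm z ^ 2"
  shows "(deriv ^^ k) f 0 / fact k = c"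
proof -
  have "((\<lambda>s. g s / s ^ Suc k) has_contour_integral (2 * pi * \<i> / fact k * (deriv ^^ k) f 0))
      (circlepath 0 R)"
    by (rule has_contour_integral_inside_boundary_values[OF inside R _ from_inside, where B = B])
       (use bound R in auto)
  moreover have "((\<lambda>s. g s * (1 / s ^ Suc k)) has_contour_integral (2 * pi * \<i> * c)) (circlepath 0 R)"
  proof (rule has_contour_integral_outside_boundary_values_mult[OF outside R _ from_outside])
    show "(\<lambda>s. 1 / s ^ Suc k) holomorphic_on - {0}"
      by (intro holomorphic_intros) auto
    show "norm (f z) \<le> B" if "R < norm z" "norm z \<le> R + 1" for z
      using that by (intro bound) auto
    show "norm (f z * (1 / z ^ Suc k) - c / z) \<le> M / norm z ^ 2" if "r0 \<le> norm z" for z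
      using decay[OF that] by simp
  qed
  ultimately have "2 * pi * \<i> / fact k * (deriv ^^ k) f 0 = 2 * pi * \<i> * c"
    by (auto dest: has_contour_integral_unique)
  then show ?thesis by (simp add: field_simps)
qed

lemma holomorphic_eq_Taylor_polynomial:
  assumes "f holomorphic_on ball 0 R" and "\<And>k. N < k \<Longrightarrow> (deriv ^^ k) f 0 = 0"
    and "z \<in> ball 0 R"
  shows "f z = (\<Sum>k\<le>N. (deriv ^^ k) f 0 / fact k * z ^ k)"
proof -
  have "(\<lambda>k. (deriv ^^ k) f 0 / fact k * (z - 0) ^ k) sums f z"
    by (rule holomorphic_power_series[OF assms(1,3)])
  moreover have "(\<lambda>k. (deriv ^^ k) f 0 / fact k * (z - 0) ^ k) sums
      (\<Sum>k\<in>{..N}. (deriv ^^ k) f 0 / fact k * (z - 0) ^ k)"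
    by (rule sums_finite) (auto simp: assms(2))
  ultimately show ?thesis using sums_unique2 by fastforce
qed

lemma boundary_value_eq:
  fixes f g :: "complex \<Rightarrow> complex"
  assumes "(f \<longlongrightarrow> L) (at z within ball 0 R)" and "z \<in> sphere 0 R" and "R > 0"
    and "\<And>w. w \<in> ball 0 R \<Longrightarrow> f w = g w" and "isCont g z"
  shows "L = g z"
proof -
  have "\<forall>\<^sub>F w in at z within ball 0 R. f w = g w"
    unfolding eventually_at_filter by (rule always_eventually) (auto simp: assms(4))
  then have lim: "(g \<longlongrightarrow> L) (at z within ball 0 R)"
    using assms(1) tendsto_cong by blast
  have cont: "(g \<longlongrightarrow> g z) (at z within ball 0 R)"
    using assms(5) continuous_at_imp_continuous_at_within by (auto simp: continuous_within)
  have "at z within ball 0 R \<noteq> bot"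
    using assms(2,3) islimpt_ball[of z 0 R] by (auto simp: trivial_limit_within)
  from this lim cont show ?thesis by (rule tendsto_unique)
qed

section \<open>The moments as polynomials in \<open>t\<close>\<close>

lemma one_minus_inverse_notin_nonpos_Reals:
  fixes z :: complex
  assumes "1 < norm z"
  shows "1 - 1 / z \<notin> \<real>\<^sub>\<le>\<^sub>0"
proof -
  have "norm (1 / z) < 1" using assms by (simp add: norm_divide divide_less_eq_1)
  then have "Re (1 / z) < 1" using abs_Re_le_cmod[of "1 / z"] by linarith
  then show ?thesis by (auto simp: complex_nonpos_Reals_iff)
qed

lemma holomorphic_on_weight: "weight K \<rho> t holomorphic_on {z. 1 < norm z}"
  unfolding weight_def[abs_def]
  by (intro holomorphic_intros) (auto simp: one_minus_inverse_notin_nonpos_Reals)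

lemma bounded_powr_one_minus_inverse:
  "\<exists>B. \<forall>z::complex. 2 \<le> norm z \<longrightarrow> norm ((1 - 1 / z) powr \<rho>) \<le> B"
proof -
  have "w \<notin> \<real>\<^sub>\<le>\<^sub>0" if "w \<in> cball 1 (1 / 2)" for w :: complex
  proof -
    have "- 1 / 2 \<le> Re (w - 1)"
      using that abs_Re_le_cmod[of "w - 1"] by (simp add: dist_norm norm_minus_commute)
    then show ?thesis by (auto simp: complex_nonpos_Reals_iff)
  qed
  then have "continuous_on (cball 1 (1 / 2)) (\<lambda>w::complex. w powr \<rho>)"
    by (intro holomorphic_on_imp_continuous_on holomorphic_intros) auto
  then obtain B where B: "\<forall>y \<in> (\<lambda>w. w powr \<rho>) ` cball 1 (1 / 2). norm y \<le> B"
    by (meson bounded_iff compact_cball compact_continuous_image compact_imp_bounded)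
  have "1 - 1 / z \<in> cball 1 (1 / 2)" if "2 \<le> norm z" for z :: complex
  proof -
    have "norm (1 / z) \<le> 1 / 2" using that by (simp add: norm_divide divide_le_eq_1)
    then show ?thesis by (simp add: dist_norm)
  qed
  then show ?thesis using B by blast
qed

definition moment :: "int \<Rightarrow> complex \<Rightarrow> real \<Rightarrow> int \<Rightarrow> complex \<Rightarrow> complex" where
  "moment K \<rho> R l t = contour_integral (circlepath 0 R) (\<lambda>z. z powi l * weight K \<rho> t z)"

lemma mu_eq_moment: "mu K \<rho> R j t = moment K \<rho> R (int j) t"
  by (simp add: mu_def moment_def)

lemma has_contour_integral_moment:
  assumes "R > 1"
  shows "((\<lambda>z. z powi l * weight K \<rho> t z) has_contour_integral moment K \<rho> R l t) (circlepath 0 R)"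
proof -
  have "(\<lambda>z. z powi l * weight K \<rho> t z) holomorphic_on {z. 1 < norm z}"
    by (intro holomorphic_intros holomorphic_on_weight) auto
  then have "(\<lambda>z. z powi l * weight K \<rho> t z) contour_integrable_on circlepath 0 R"
    by (intro contour_integrable_continuous_circlepath continuous_on_subset
        [OF holomorphic_on_imp_continuous_on]) (use assms in auto)
  then show ?thesis unfolding moment_def by (rule has_contour_integral_integral)
qed

lemma has_contour_integral_poly_times_weight:
  assumes "R > 1"
  shows "((\<lambda>z. (\<Sum>i\<le>n. c i * z ^ i) * weight K \<rho> t z * z powi k) has_contour_integral
     (\<Sum>i\<le>n. c i * moment K \<rho> R (int i + k) t)) (circlepath 0 R)"
proof -
  have "((\<lambda>z. \<Sum>i\<le>n. c i * (z powi (int i + k) * weight K \<rho> t z)) has_contour_integral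
     (\<Sum>i\<le>n. c i * moment K \<rho> R (int i + k) t)) (circlepath 0 R)"
    by (intro has_contour_integral_sum has_contour_integral_lmul has_contour_integral_moment assms)
      auto
  then show ?thesis
  proof (rule has_contour_integral_eq)
    fix z assume "z \<in> path_image (circlepath 0 R)"
    then have "z \<noteq> 0" using assms by auto
    then show "(\<Sum>i\<le>n. c i * (z powi (int i + k) * weight K \<rho> t z))
        = (\<Sum>i\<le>n. c i * z ^ i) * weight K \<rho> t z * z powi k"
      by (simp add: power_int_add sum_distrib_left sum_distrib_right mult_ac)
  qed
qed

lemma norm_exp_divide_remainder_le:
  fixes t z :: complex
  assumes "1 \<le> norm z"
  shows "norm (exp (t / z) - (\<Sum>m\<le>N. (t / z) ^ m / fact m))
    \<le> exp (norm t) * norm t ^ Suc N / norm z ^ Suc N"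
proof -
  have "norm (exp (t / z) - (\<Sum>m\<le>N. (t / z) ^ m / fact m))
      \<le> exp (norm (t / z)) * norm (t / z) ^ Suc N / fact N"
    by (rule Taylor_exp_field)
  also have "\<dots> \<le> exp (norm t) * norm (t / z) ^ Suc N / 1"
    using assms by (intro frac_le mult_right_mono)
      (auto simp: norm_divide divide_le_eq mult_le_cancel_left1)
  also have "\<dots> = exp (norm t) * norm t ^ Suc N / norm z ^ Suc N"
    by (simp add: norm_divide power_divide)
  finally show ?thesis .
qed

lemma weight_Taylor_remainder_decay:
  assumes N: "l + K + 1 \<le> int N"
  obtains C where "\<And>z. 2 \<le> norm z \<Longrightarrow>
    norm (z powi l * weight K \<rho> 0 z * (exp (t / z) - (\<Sum>m\<le>N. (t / z) ^ m / fact m)))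
      \<le> C / norm z ^ 2"
proof -
  obtain B where B: "\<And>z::complex. 2 \<le> norm z \<Longrightarrow> norm ((1 - 1 / z) powr \<rho>) \<le> B"
    using bounded_powr_one_minus_inverse by blast
  define C where "C = B * exp (norm t) * norm t ^ Suc N"
  show thesis
  proof (rule that)
    fix z :: complex assume z: "2 \<le> norm z"
    have z0: "z \<noteq> 0" "1 \<le> norm z" using z by auto
    have B0: "0 \<le> B" using order_trans[OF norm_ge_zero B[OF z]] .
    have "norm (z powi l * weight K \<rho> 0 z * (exp (t / z) - (\<Sum>m\<le>N. (t / z) ^ m / fact m)))
        = norm z powi (l + K) * norm ((1 - 1 / z) powr \<rho>)
          * norm (exp (t / z) - (\<Sum>m\<le>N. (t / z) ^ m / fact m))"
      using z0 by (simp add: weight_def norm_mult norm_power_int power_int_add)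
    also have "\<dots> \<le> norm z powi (l + K) * B * (exp (norm t) * norm t ^ Suc N / norm z ^ Suc N)"
      using B0 by (intro mult_mono mult_left_mono B z norm_exp_divide_remainder_le z0) auto
    also have "\<dots> = C * norm z powi (l + K - int (Suc N))"
      using z0 by (simp add: C_def power_int_diff field_simps del: of_nat_Suc)
    also have "\<dots> \<le> C * norm z powi (-2)"
      unfolding C_def using N z0 B0 by (intro mult_left_mono power_int_increasing) auto
    finally show "norm (z powi l * weight K \<rho> 0 z * (exp (t / z) - (\<Sum>m\<le>N. (t / z) ^ m / fact m)))
        \<le> C / norm z ^ 2"
      by (simp add: power_int_minus field_simps)
  qed
qed

text \<open>Expanding \<open>e\<^sup>t\<^sup>/\<^sup>z\<close> in powers of \<open>t/z\<close>; the remainder of order \<open>N + 1\<close> is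
  \<open>O(z\<^sup>-\<^sup>2)\<close> at infinity and therefore integrates to zero.\<close>

lemma moment_Taylor:
  assumes R: "R > 1" and N: "l + K + 1 \<le> int N"
  shows "moment K \<rho> R l t = (\<Sum>m\<le>N. t ^ m / fact m * moment K \<rho> R (l - int m) 0)"
proof -
  define w where "w = weight K \<rho> 0"
  define f where "f z = z powi l * weight K \<rho> t z - (\<Sum>m\<le>N. t ^ m / fact m * (z powi (l - int m) * w z))"
    for z
  have f_eq: "f z = z powi l * w z * (exp (t / z) - (\<Sum>m\<le>N. (t / z) ^ m / fact m))" if "z \<noteq> 0" for z
  proof -
    have "(\<Sum>m\<le>N. t ^ m / fact m * (z powi (l - int m) * w z))
        = z powi l * w z * (\<Sum>m\<le>N. (t / z) ^ m / fact m)"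
      unfolding sum_distrib_left
      by (intro sum.cong refl) (use that in \<open>simp add: power_int_diff power_divide field_simps\<close>)
    then show ?thesis
      by (simp add: f_def weight_def w_def algebra_simps)
  qed
  obtain C where C: "\<And>z. 2 \<le> norm z \<Longrightarrow>
      norm (z powi l * w z * (exp (t / z) - (\<Sum>m\<le>N. (t / z) ^ m / fact m))) \<le> C / norm z ^ 2"
    using weight_Taylor_remainder_decay[OF N] unfolding w_def by blast
  have decay: "norm (f z - 0 / z) \<le> C / norm z ^ 2" if z: "2 \<le> norm z" for z
  proof -
    have "z \<noteq> 0" using z by auto
    then show ?thesis using C[OF z] by (simp add: f_eq)
  qed
  have "f holomorphic_on {z. 1 < norm z}"
    unfolding f_def[abs_def] w_def by (intro holomorphic_intros holomorphic_on_weight) auto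
  then have "(f has_contour_integral (2 * pi * \<i> * 0)) (circlepath 0 R)"
    by (rule has_contour_integral_circlepath_at_infinity[OF _ _ R decay]) auto
  moreover have "((\<lambda>z. \<Sum>m\<le>N. t ^ m / fact m * (z powi (l - int m) * w z)) has_contour_integral
      (\<Sum>m\<le>N. t ^ m / fact m * moment K \<rho> R (l - int m) 0)) (circlepath 0 R)"
    unfolding w_def
    by (intro has_contour_integral_sum has_contour_integral_lmul has_contour_integral_moment R) auto
  then have "(f has_contour_integral
      (moment K \<rho> R l t - (\<Sum>m\<le>N. t ^ m / fact m * moment K \<rho> R (l - int m) 0))) (circlepath 0 R)"
    unfolding f_def[abs_def] by (intro has_contour_integral_diff has_contour_integral_moment R)
  ultimately show ?thesis
    using has_contour_integral_unique by fastforce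
qed

lemma moment_poly:
  assumes "R > 1"
  shows "\<exists>p. \<forall>t. moment K \<rho> R l t = poly p t"
proof -
  have "l + K + 1 \<le> int (nat (l + K + 1))" by simp
  from moment_Taylor[OF assms this]
  have "moment K \<rho> R l t
      = poly (\<Sum>m\<le>nat (l + K + 1). monom (moment K \<rho> R (l - int m) 0 / fact m) m) t" for t
    by (simp add: poly_sum poly_monom mult_ac)
  then show ?thesis by blast
qed

lemma has_field_derivative_moment:
  assumes R: "R > 1"
  shows "(moment K \<rho> R l has_field_derivative moment K \<rho> R (l - 1) t) (at t)"
proof -
  define N where "N = nat (l + K + 1)"
  define a where "a m = moment K \<rho> R (l - int m) 0" for m
  have N: "l + K + 1 \<le> int (Suc N)" "l - 1 + K + 1 \<le> int N" by (simp_all add: N_def)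
  have "moment K \<rho> R l = (\<lambda>t. \<Sum>m\<le>Suc N. t ^ m / fact m * a m)"
    using moment_Taylor[OF R N(1)] by (simp add: a_def fun_eq_iff)
  moreover have "moment K \<rho> R (l - 1) t = (\<Sum>m\<le>N. t ^ m / fact m * a (Suc m))"
    using moment_Taylor[OF R N(2)] by (simp add: a_def algebra_simps)
  moreover have "((\<lambda>t. \<Sum>m\<le>Suc N. t ^ m / fact m * a m) has_field_derivative
      (\<Sum>m\<le>Suc N. of_nat m * (1 * t ^ (m - Suc 0)) / fact m * a m)) (at t)"
    by (intro DERIV_sum DERIV_cmult_right DERIV_cdivide DERIV_power DERIV_ident)
  moreover have "(\<Sum>m\<le>Suc N. of_nat m * (1 * t ^ (m - Suc 0)) / fact m * a m)
      = (\<Sum>m\<le>N. t ^ m / fact m * a (Suc m))"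
    by (subst sum.atMost_Suc_shift) (simp add: fact_Suc field_simps del: of_nat_Suc)
  ultimately show ?thesis by simp
qed

section \<open>The Hankel determinant\<close>

lemma tau_eq_det_moment: "tau K \<rho> R n t = det (mat n n (\<lambda>(i, j). moment K \<rho> R (int (i + j)) t))"
  by (simp add: tau_def mu_eq_moment case_prod_beta)

lemma tau_poly:
  assumes "R > 1"
  shows "\<exists>p. \<forall>t. tau K \<rho> R n t = poly p t"
proof -
  have "\<forall>l. \<exists>p. \<forall>t. moment K \<rho> R l t = poly p t"
    using moment_poly[OF assms] by blast
  then obtain P where P: "\<And>l t. moment K \<rho> R l t = poly (P l) t" by metis
  have "tau K \<rho> R n t = poly (det (mat n n (\<lambda>(i, j). P (int (i + j))))) t" for t
    unfolding tau_eq_det_moment by (rule poly_det_cong[symmetric]) (auto simp: P)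
  then show ?thesis by blast
qed

lemma det_mat_eq_Leibniz:
  "det (mat n n (\<lambda>(i, j). A i j)) = (\<Sum>p | p permutes {0..<n}. signof p * (\<Prod>i = 0..<n. A i (p i)))"
proof -
  have "p i < n" if "p permutes {0..<n}" "i < n" for p i
    using that permutes_in_image by fastforce
  then show ?thesis
    by (subst det_def'[of _ n]) (auto intro!: sum.cong prod.cong)
qed

lemma has_field_derivative_det:
  fixes F :: "'a::real_normed_field \<Rightarrow> nat \<Rightarrow> nat \<Rightarrow> 'a"
  assumes "\<And>i j. i < n \<Longrightarrow> j < n \<Longrightarrow> ((\<lambda>t. F t i j) has_field_derivative F' i j) (at t0)"
  shows "((\<lambda>t. det (mat n n (\<lambda>(i, j). F t i j))) has_field_derivative
     (\<Sum>k<n. det (mat n n (\<lambda>(i, j). if i = k then F' i j else F t0 i j)))) (at t0)"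
proof -
  let ?P = "{p. p permutes {0..<n}}"
  have p_lt: "p i < n" if "p \<in> ?P" "i < n" for p i
    using that permutes_in_image by fastforce
  have row_k: "F' k (p k) * (\<Prod>i\<in>{..<n} - {k}. F t0 i (p i))
      = (\<Prod>i<n. if i = k then F' i (p i) else F t0 i (p i))" if "k < n" for k p
    using that by (subst prod.remove[of _ k]) (auto intro!: prod.cong)
  have "((\<lambda>t. \<Sum>p\<in>?P. signof p * (\<Prod>i<n. F t i (p i))) has_field_derivative
      (\<Sum>p\<in>?P. signof p * (\<Sum>k<n. F' k (p k) * (\<Prod>i\<in>{..<n} - {k}. F t0 i (p i))))) (at t0)"
    by (intro DERIV_sum DERIV_cmult has_field_derivative_prod assms) (auto simp: p_lt)
  also have "(\<Sum>p\<in>?P. signof p * (\<Sum>k<n. F' k (p k) * (\<Prod>i\<in>{..<n} - {k}. F t0 i (p i))))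
      = (\<Sum>p\<in>?P. \<Sum>k<n. signof p * (\<Prod>i<n. if i = k then F' i (p i) else F t0 i (p i)))"
    by (auto simp: sum_distrib_left row_k intro!: sum.cong)
  also have "\<dots> = (\<Sum>k<n. \<Sum>p\<in>?P. signof p * (\<Prod>i<n. if i = k then F' i (p i) else F t0 i (p i)))"
    by (rule sum.swap)
  finally show ?thesis by (simp add: det_mat_eq_Leibniz atLeast0LessThan)
qed

lemma deriv_tau:
  assumes R: "R > 1" and n: "n \<ge> 1"
  shows "deriv (tau K \<rho> R n) t = det (mat n n (\<lambda>(i, j).
    if i = 0 then moment K \<rho> R (int j - 1) t else moment K \<rho> R (int (i + j)) t))"
proof -
  let ?m = "moment K \<rho> R"
  define D where "D k = det (mat n n (\<lambda>(i, j).
    if i = k then ?m (int (i + j) - 1) t else ?m (int (i + j)) t))" for k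
  have "(tau K \<rho> R n has_field_derivative (\<Sum>k<n. D k)) (at t)"
    unfolding tau_eq_det_moment[abs_def] D_def
    by (rule has_field_derivative_det) (rule has_field_derivative_moment[OF R])
  moreover have "D (Suc k) = 0" if k: "Suc k < n" for k
    \<comment> \<open>the differentiated row \<open>k + 1\<close> repeats row \<open>k\<close>\<close>
  proof -
    define A where "A = mat n n (\<lambda>(i, j).
      if i = Suc k then ?m (int (i + j) - 1) t else ?m (int (i + j)) t)"
    have "row A (Suc k) = row A k"
      using k by (intro eq_vecI) (simp_all add: A_def algebra_simps)
    then have "det A = 0"
      using k by (intro det_identical_rows[of A n "Suc k" k]) (simp_all add: A_def)
    then show ?thesis unfolding D_def A_def .
  qed
  then have "(\<Sum>k<n. D k) = D 0"
    using n by (cases n) (auto simp: sum.lessThan_Suc_shift simp del: sum.lessThan_Suc)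
  moreover have "D 0 = det (mat n n (\<lambda>(i, j).
      if i = 0 then ?m (int j - 1) t else ?m (int (i + j)) t))"
    unfolding D_def by (intro arg_cong[where f = det] eq_matI) auto
  ultimately show ?thesis using DERIV_imp_deriv by metis
qed

lemma cofactor_mult_eq_det_mult_solution:
  fixes H :: "'a::comm_ring_1 mat"
  assumes H: "H \<in> carrier_mat n n" and k: "k < n" and j: "j < n"
    and solves: "\<And>i. i < n \<Longrightarrow> (\<Sum>j<n. H $$ (i, j) * f j) = (if i = k then c else 0)"
  shows "c * cofactor H k j = det H * f j"
proof -
  have adj: "(\<Sum>i<n. cofactor H i j * H $$ (i, l)) = (if j = l then det H else 0)" if "l < n" for l
  proof -
    have "(adj_mat H * H) $$ (j, l) = (\<Sum>i<n. cofactor H i j * H $$ (i, l))"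
      using that j H adj_mat(1)[OF H]
      by (auto simp: adj_mat_def scalar_prod_def Matrix.row_def Matrix.col_def lessThan_atLeast0
          intro!: sum.cong)
    then show ?thesis using adj_mat(3)[OF H] that j by (cases "j = l") auto
  qed
  have "(\<Sum>l<n. (\<Sum>i<n. cofactor H i j * H $$ (i, l)) * f l)
      = (\<Sum>l<n. if j = l then det H * f l else 0)"
    by (intro sum.cong refl) (simp add: adj)
  then have "det H * f j = (\<Sum>l<n. (\<Sum>i<n. cofactor H i j * H $$ (i, l)) * f l)"
    using j by simp
  also have "\<dots> = (\<Sum>l<n. \<Sum>i<n. cofactor H i j * H $$ (i, l) * f l)"
    by (simp add: sum_distrib_right)
  also have "\<dots> = (\<Sum>i<n. \<Sum>l<n. cofactor H i j * H $$ (i, l) * f l)"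
    by (rule sum.swap)
  also have "\<dots> = (\<Sum>i<n. cofactor H i j * (\<Sum>l<n. H $$ (i, l) * f l))"
    by (simp add: sum_distrib_left mult.assoc)
  also have "\<dots> = c * cofactor H k j"
    using k by (simp add: solves if_distrib cong: if_cong)
  finally show ?thesis by simp
qed

lemma det_replace_row_mult:
  fixes H :: "'a::comm_ring_1 mat"
  assumes H: "H \<in> carrier_mat n n" and k: "k < n"
    and solves: "\<And>i. i < n \<Longrightarrow> (\<Sum>j<n. H $$ (i, j) * f j) = (if i = k then c else 0)"
  shows "c * det (mat n n (\<lambda>(i, j). if i = k then v j else H $$ (i, j))) = det H * (\<Sum>j<n. v j * f j)"
proof -
  define A where "A = mat n n (\<lambda>(i, j). if i = k then v j else H $$ (i, j))"
  have "det A = (\<Sum>j<n. A $$ (k, j) * cofactor A k j)"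
    by (rule laplace_expansion_row) (use k in \<open>auto simp: A_def\<close>)
  also have "\<dots> = (\<Sum>j<n. v j * cofactor H k j)"
  proof (intro sum.cong refl)
    fix j assume "j \<in> {..<n}"
    moreover have "mat_delete A k j = mat_delete H k j"
      using k H by (intro eq_matI) (auto simp: A_def mat_delete_def)
    ultimately show "A $$ (k, j) * cofactor A k j = v j * cofactor H k j"
      using k by (simp add: A_def cofactor_def)
  qed
  finally have "c * det A = (\<Sum>j<n. v j * (c * cofactor H k j))"
    by (simp add: sum_distrib_left mult_ac)
  also have "\<dots> = det H * (\<Sum>j<n. v j * f j)"
    using cofactor_mult_eq_det_mult_solution[OF H k _ solves]
    by (simp add: sum_distrib_left mult_ac)
  finally show ?thesis unfolding A_def .
qed

lemma sum_atMost_eq_first_two: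
  fixes g :: "nat \<Rightarrow> 'a::comm_monoid_add"
  assumes "1 \<le> n" and "\<And>j. 2 \<le> j \<Longrightarrow> j \<le> n \<Longrightarrow> g j = 0"
  shows "(\<Sum>j\<le>n. g j) = g 0 + g 1"
proof -
  have "(\<Sum>j\<le>n. g j) = (\<Sum>j\<in>{0, 1}. g j)"
    using assms by (intro sum.mono_neutral_right) auto
  then show ?thesis by simp
qed

text \<open>Both sides are the double sum of \<open>a i * d j * N (i + j - 2)\<close>; the orthogonality relations
  remove the terms with \<open>j \<ge> 2\<close> on the left and those with \<open>i \<ge> 2\<close> on the right.\<close>

lemma cross_moments_symmetric:
  fixes N :: "int \<Rightarrow> 'a::comm_ring_1" and a d :: "nat \<Rightarrow> 'a"
  assumes n: "n \<ge> 1"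
    and orth_a: "\<And>k. k < n \<Longrightarrow> (\<Sum>i\<le>n. a i * N (int i + int k)) = 0"
    and orth_d: "\<And>k. k < n - 1 \<Longrightarrow> (\<Sum>i\<le>n. d i * N (int i + int k)) = 0"
  shows "d 0 * (\<Sum>i\<le>n. a i * N (int i - 2)) + d 1 * (\<Sum>i\<le>n. a i * N (int i - 1))
    = a 0 * (\<Sum>i\<le>n. d i * N (int i - 2)) + a 1 * (\<Sum>i\<le>n. d i * N (int i - 1))"
proof -
  have "(\<Sum>j\<le>n. d j * (\<Sum>i\<le>n. a i * N (int i + (int j - 2))))
      = (\<Sum>j\<le>n. \<Sum>i\<le>n. a i * d j * N (int i + int j - 2))"
    by (simp add: sum_distrib_left algebra_simps)
  also have "\<dots> = (\<Sum>i\<le>n. \<Sum>j\<le>n. a i * d j * N (int i + int j - 2))"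
    by (rule sum.swap)
  also have "\<dots> = (\<Sum>i\<le>n. a i * (\<Sum>j\<le>n. d j * N (int j + (int i - 2))))"
    by (simp add: sum_distrib_left algebra_simps)
  finally have swap: "(\<Sum>j\<le>n. d j * (\<Sum>i\<le>n. a i * N (int i + (int j - 2))))
      = (\<Sum>i\<le>n. a i * (\<Sum>j\<le>n. d j * N (int j + (int i - 2))))" .
  have "(\<Sum>j\<le>n. d j * (\<Sum>i\<le>n. a i * N (int i + (int j - 2))))
      = d 0 * (\<Sum>i\<le>n. a i * N (int i + (int 0 - 2))) + d 1 * (\<Sum>i\<le>n. a i * N (int i + (int 1 - 2)))"
  proof (rule sum_atMost_eq_first_two[OF n])
    fix j :: nat assume j: "2 \<le> j" "j \<le> n"
    then have "int j - 2 = int (j - 2)" by simp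
    then show "d j * (\<Sum>i\<le>n. a i * N (int i + (int j - 2))) = 0"
      using orth_a[of "j - 2"] j by simp
  qed
  moreover have "(\<Sum>i\<le>n. a i * (\<Sum>j\<le>n. d j * N (int j + (int i - 2))))
      = a 0 * (\<Sum>j\<le>n. d j * N (int j + (int 0 - 2))) + a 1 * (\<Sum>j\<le>n. d j * N (int j + (int 1 - 2)))"
  proof (rule sum_atMost_eq_first_two[OF n])
    fix i :: nat assume i: "2 \<le> i" "i \<le> n"
    then have "int i - 2 = int (i - 2)" by simp
    then show "a i * (\<Sum>j\<le>n. d j * N (int j + (int i - 2))) = 0"
      using orth_d[of "i - 2"] i by simp
  qed
  ultimately show ?thesis using swap by (simp add: algebra_simps)
qed

lemma sum_difference_quotient_moments:
  fixes N :: "int \<Rightarrow> 'a::comm_ring_1" and a d :: "nat \<Rightarrow> 'a"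
  shows "(\<Sum>j<n. N (int j + q) * (a (Suc j) * d 0 - d (Suc j) * a 0))
    = d 0 * (\<Sum>i\<le>n. a i * N (int i + q - 1)) - a 0 * (\<Sum>i\<le>n. d i * N (int i + q - 1))"
proof -
  have "(\<Sum>i\<le>n. a i * N (int i + q - 1)) = a 0 * N (q - 1) + (\<Sum>j<n. a (Suc j) * N (int j + q))"
    and "(\<Sum>i\<le>n. d i * N (int i + q - 1)) = d 0 * N (q - 1) + (\<Sum>j<n. d (Suc j) * N (int j + q))"
    by (subst sum.atMost_shift, simp add: algebra_simps)+
  then show ?thesis
    by (simp add: sum_distrib_left sum_subtractf algebra_simps)
qed

lemma difference_quotient_solves_hankel_system:
  fixes N :: "int \<Rightarrow> 'a::comm_ring_1" and a d :: "nat \<Rightarrow> 'a"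
  assumes orth_a: "\<And>k. k < n \<Longrightarrow> (\<Sum>i\<le>n. a i * N (int i + int k)) = 0"
    and orth_d: "\<And>k. k < n - 1 \<Longrightarrow> (\<Sum>i\<le>n. d i * N (int i + int k)) = 0"
    and ya: "c * ya = (\<Sum>i\<le>n. a i * N (int i - 1))"
    and yd: "c * yd = (\<Sum>i\<le>n. d i * N (int i - 1))"
    and det: "a 0 * yd - ya * d 0 = 1" and i: "i < n"
  shows "(\<Sum>j<n. N (int (i + j)) * (a (Suc j) * d 0 - d (Suc j) * a 0)) = (if i = 0 then - c else 0)"
proof (cases i)
  case 0
  then have "(\<Sum>j<n. N (int (i + j)) * (a (Suc j) * d 0 - d (Suc j) * a 0))
      = d 0 * (c * ya) - a 0 * (c * yd)"
    using sum_difference_quotient_moments[where n = n and N = N and a = a and d = d and q = 0]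
    by (simp add: ya yd)
  also have "\<dots> = - c" using det by (simp add: algebra_simps)
  finally show ?thesis using 0 by simp
next
  case (Suc i')
  then show ?thesis
    using sum_difference_quotient_moments[where n = n and N = N and a = a and d = d and q = "int i"]
      orth_a[of i'] orth_d[of i'] i
    by (simp add: add_ac)
qed

text \<open>In the application \<open>N\<close> is the moment sequence and \<open>a\<close>, \<open>d\<close> are the coefficients of
  \<open>P = Y\<^sub>1\<^sub>1\<close> and \<open>Q = Y\<^sub>2\<^sub>1\<close>.  The coefficients of \<open>(Q(0) P(z) - P(0) Q(z)) / z\<close> solve the
  Hankel system with right-hand side \<open>-c e\<^sub>0\<close>, so Cramer's rule applies.\<close>

lemma hankel_det_first_row_shift:
  fixes N :: "int \<Rightarrow> 'a::field" and a d :: "nat \<Rightarrow> 'a"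
  assumes n: "n \<ge> 1" and c: "c \<noteq> 0"
    and orth_a: "\<And>k. k < n \<Longrightarrow> (\<Sum>i\<le>n. a i * N (int i + int k)) = 0"
    and orth_d: "\<And>k. k < n \<Longrightarrow> (\<Sum>i\<le>n. d i * N (int i + int k)) = (if k = n - 1 then - c else 0)"
    and ya: "c * ya = (\<Sum>i\<le>n. a i * N (int i - 1))"
    and yd: "c * yd = (\<Sum>i\<le>n. d i * N (int i - 1))"
    and det: "a 0 * yd - ya * d 0 = 1"
  shows "det (mat n n (\<lambda>(i, j). if i = 0 then N (int j - 1) else N (int (i + j))))
    = - (yd * a 1 - ya * d 1) * det (mat n n (\<lambda>(i, j). N (int (i + j))))"
proof -
  define f where "f j = a (Suc j) * d 0 - d (Suc j) * a 0" for j
  define H where "H = mat n n (\<lambda>(i, j). N (int (i + j)))"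
  define M0 where "M0 = mat n n (\<lambda>(i, j). if i = 0 then N (int j - 1) else N (int (i + j)))"
  have orth_d': "(\<Sum>i\<le>n. d i * N (int i + int k)) = 0" if "k < n - 1" for k
    using orth_d[of k] that by simp
  have solves: "(\<Sum>j<n. N (int (i + j)) * f j) = (if i = 0 then - c else 0)" if "i < n" for i
    unfolding f_def by (rule difference_quotient_solves_hankel_system[OF orth_a orth_d' ya yd det that])
  have "- c * det (mat n n (\<lambda>(i, j). if i = 0 then N (int j - 1) else H $$ (i, j)))
      = det H * (\<Sum>j<n. N (int j - 1) * f j)"
    by (rule det_replace_row_mult) (use n solves in \<open>auto simp: H_def\<close>)
  also have "(\<Sum>j<n. N (int j - 1) * f j)
      = d 0 * (\<Sum>i\<le>n. a i * N (int i - 2)) - a 0 * (\<Sum>i\<le>n. d i * N (int i - 2))"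
    using sum_difference_quotient_moments[where n = n and N = N and a = a and d = d and q = "-1"]
    by (simp add: f_def)
  also have "\<dots> = a 1 * (\<Sum>i\<le>n. d i * N (int i - 1)) - d 1 * (\<Sum>i\<le>n. a i * N (int i - 1))"
    using cross_moments_symmetric[OF n orth_a orth_d'] by (simp add: algebra_simps)
  also have "\<dots> = c * (yd * a 1 - ya * d 1)"
    by (simp add: ya[symmetric] yd[symmetric] algebra_simps)
  also have "mat n n (\<lambda>(i, j). if i = 0 then N (int j - 1) else H $$ (i, j)) = M0"
    by (auto simp: H_def M0_def intro!: eq_matI)
  finally have "c * (det M0 + (yd * a 1 - ya * d 1) * det H) = 0"
    by (simp add: algebra_simps)
  then have "det M0 + (yd * a 1 - ya * d 1) * det H = 0"
    using c by simp
  then have "det M0 = - ((yd * a 1 - ya * d 1) * det H)"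
    by (rule add_eq_0_iff2[THEN iffD1])
  then show ?thesis
    unfolding M0_def[symmetric] H_def[symmetric] by (simp add: algebra_simps)
qed

section \<open>The Riemann--Hilbert problem\<close>

lemma index_mult_mat_2:
  assumes "A \<in> carrier_mat 2 2" "B \<in> carrier_mat 2 2" "i < 2" "j < 2"
  shows "(A * B) $$ (i, j) = A $$ (i, 0) * B $$ (0, j) + A $$ (i, 1) * B $$ (1, j)"
  using assms by (simp add: scalar_prod_def numeral_2_eq_2 Matrix.row_def Matrix.col_def)

lemma left_inverse_mat_2:
  fixes A B :: "'a::comm_ring_1 mat"
  assumes A: "A \<in> carrier_mat 2 2" and B: "B \<in> carrier_mat 2 2" and BA: "B * A = 1\<^sub>m 2"
    and det: "A $$ (0, 0) * A $$ (1, 1) - A $$ (0, 1) * A $$ (1, 0) = 1"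
  shows "B = mat 2 2 (\<lambda>(i, j). if i = 0 then (if j = 0 then A $$ (1, 1) else - A $$ (0, 1))
    else (if j = 0 then - A $$ (1, 0) else A $$ (0, 0)))" (is "B = ?adj")
proof -
  have adj: "?adj \<in> carrier_mat 2 2" by simp
  have "A * ?adj = 1\<^sub>m 2"
  proof (rule eq_matI)
    fix i j assume "i < dim_row (1\<^sub>m 2)" "j < dim_col (1\<^sub>m 2)"
    then have ij: "i < 2" "j < 2" by auto
    show "(A * ?adj) $$ (i, j) = 1\<^sub>m 2 $$ (i, j)"
      unfolding index_mult_mat_2[OF A adj ij] using ij det by (auto simp: less_2_cases_iff algebra_simps)
  qed (use A in auto)
  then have "B = (B * A) * ?adj"
    using A B by (simp add: assoc_mult_mat[OF B A adj])
  then show ?thesis using BA by simp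
qed

lemma mat_trace_mult_sigma3:
  assumes "M \<in> carrier_mat 2 2"
  shows "mat_trace (M * sigma3) = M $$ (0, 0) - M $$ (1, 1)"
proof -
  have S: "sigma3 \<in> carrier_mat 2 2" by (simp add: sigma3_def)
  have "(M * sigma3) $$ (0, 0) = M $$ (0, 0)" "(M * sigma3) $$ (1, 1) = - M $$ (1, 1)"
    by (subst index_mult_mat_2[OF assms S]; simp add: sigma3_def)+
  moreover have "mat_trace (M * sigma3) = (M * sigma3) $$ (0, 0) + (M * sigma3) $$ (1, 1)"
    using assms S by (simp add: mat_trace_def numeral_2_eq_2)
  ultimately show ?thesis by simp
qed

lemma norm_mult_power_div_le:
  fixes u z :: complex
  assumes z: "1 \<le> norm z" and u: "norm u \<le> M / norm z ^ a" and pq: "p + 2 \<le> q + a"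
  shows "norm (u * z ^ p / z ^ q) \<le> M / norm z ^ 2"
proof -
  have z0: "0 < norm z" using z by linarith
  have "0 < norm z ^ a" using z0 by simp
  then have M: "0 \<le> M" using order_trans[OF norm_ge_zero u] by (auto simp: zero_le_divide_iff)
  have "norm (u * z ^ p / z ^ q) = norm u * norm z ^ p / norm z ^ q"
    by (simp add: norm_mult norm_divide norm_power)
  also have "\<dots> \<le> M / norm z ^ a * norm z ^ p / norm z ^ q"
    using u by (intro divide_right_mono mult_right_mono) auto
  also have "\<dots> = M * norm z ^ p / norm z ^ (q + a)"
    using z0 by (simp add: power_add field_simps)
  also have "\<dots> \<le> M * norm z ^ p / norm z ^ (p + 2)"
    using z z0 M pq by (intro divide_left_mono power_increasing) auto
  also have "\<dots> = M / norm z ^ 2"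
    using z0 by (simp add: power_add power2_eq_square)
  finally show ?thesis .
qed

locale RH_solution =
  fixes K :: int and \<rho> :: complex and R :: real and n :: nat and t :: complex
    and Y Yp Ym :: "complex \<Rightarrow> complex mat" and B C r0 :: real
  assumes R: "R > 1" and n: "n \<ge> 1"
    and carrier: "\<And>z. Y z \<in> carrier_mat 2 2"
    and inside: "\<And>i j. i < 2 \<Longrightarrow> j < 2 \<Longrightarrow> (\<lambda>z. Y z $$ (i, j)) holomorphic_on ball 0 R"
    and outside: "\<And>i j. i < 2 \<Longrightarrow> j < 2 \<Longrightarrow> (\<lambda>z. Y z $$ (i, j)) holomorphic_on - cball 0 R"
    and bound: "\<And>i j z. i < 2 \<Longrightarrow> j < 2 \<Longrightarrow> norm z \<le> R + 1 \<Longrightarrow> norm z \<noteq> R \<Longrightarrow>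
      norm (Y z $$ (i, j)) \<le> B"
    and from_inside: "\<And>i j z. i < 2 \<Longrightarrow> j < 2 \<Longrightarrow> z \<in> sphere 0 R \<Longrightarrow>
      ((\<lambda>w. Y w $$ (i, j)) \<longlongrightarrow> Yp z $$ (i, j)) (at z within ball 0 R)"
    and from_outside: "\<And>i j z. i < 2 \<Longrightarrow> j < 2 \<Longrightarrow> z \<in> sphere 0 R \<Longrightarrow>
      ((\<lambda>w. Y w $$ (i, j)) \<longlongrightarrow> Ym z $$ (i, j)) (at z within - cball 0 R)"
    and Ym_carrier: "\<And>z. z \<in> sphere 0 R \<Longrightarrow> Ym z \<in> carrier_mat 2 2"
    and jump: "\<And>z. z \<in> sphere 0 R \<Longrightarrow> Yp z = Ym z * jump_mat K \<rho> t z"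
    and r0: "r0 \<ge> 1" and C: "C \<ge> 0"
    and normalization: "\<And>i j z. i < 2 \<Longrightarrow> j < 2 \<Longrightarrow> r0 \<le> norm z \<Longrightarrow>
      norm ((Y z * zpow_sigma3 n (inverse z)) $$ (i, j) - (if i = j then 1 else 0)) \<le> C / norm z"

lemma good_off_circle_entries_bounded:
  fixes Y :: "complex \<Rightarrow> complex mat"
  assumes "\<And>i j. i < 2 \<Longrightarrow> j < 2 \<Longrightarrow> good_off_circle R (\<lambda>z. Y z $$ (i, j))"
  obtains B where "\<And>i j z. i < 2 \<Longrightarrow> j < 2 \<Longrightarrow> norm z \<le> R + 1 \<Longrightarrow> norm z \<noteq> R \<Longrightarrow>
    norm (Y z $$ (i, j)) \<le> B"
proof -
  have "bounded ((\<lambda>z. Y z $$ (i, j)) ` (cball 0 (R + 1) - sphere 0 R))" if "i < 2" "j < 2" for i j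
    using assms[OF that] bounded_cball unfolding good_off_circle_def by blast
  then have "bounded (\<Union>i<2. \<Union>j<2. (\<lambda>z. Y z $$ (i, j)) ` (cball 0 (R + 1) - sphere 0 R))"
    by auto
  then obtain B where
    B: "\<forall>y \<in> (\<Union>i<2. \<Union>j<2. (\<lambda>z. Y z $$ (i, j)) ` (cball 0 (R + 1) - sphere 0 R)). norm y \<le> B"
    unfolding bounded_iff by blast
  show thesis
  proof (rule that)
    fix i j :: nat and z :: complex
    assume "i < 2" "j < 2" "norm z \<le> R + 1" "norm z \<noteq> R"
    then show "norm (Y z $$ (i, j)) \<le> B" using B by auto
  qed
qed

lemma RHP_solution_imp_RH_solution:
  assumes RHP: "RHP_solution K \<rho> R n t Y" and R: "R > 1" and n: "n \<ge> 1"
  shows "\<exists>Yp Ym B C r0. RH_solution K \<rho> R n t Y Yp Ym B C r0"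
proof -
  note defs = RHP[unfolded RHP_solution_def]
  have good: "good_off_circle R (\<lambda>z. Y z $$ (i, j))" if "i < 2" "j < 2" for i j
    using defs[THEN conjunct2, THEN conjunct1] that by blast
  obtain Yp Ym where boundary: "\<forall>z \<in> sphere 0 R. Yp z \<in> carrier_mat 2 2 \<and> Ym z \<in> carrier_mat 2 2 \<and>
      (\<forall>i<2. \<forall>j<2. ((\<lambda>w. Y w $$ (i, j)) \<longlongrightarrow> Yp z $$ (i, j)) (at z within ball 0 R) \<and>
        ((\<lambda>w. Y w $$ (i, j)) \<longlongrightarrow> Ym z $$ (i, j)) (at z within - cball 0 R)) \<and>
      Yp z = Ym z * jump_mat K \<rho> t z"
    using defs[THEN conjunct2, THEN conjunct2, THEN conjunct2, THEN conjunct1] by blast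
  obtain C r where Cr: "\<forall>z. r < norm z \<longrightarrow> (\<forall>i<2. \<forall>j<2.
      norm ((Y z * zpow_sigma3 n (inverse z)) $$ (i, j) - (if i = j then 1 else 0)) \<le> C / norm z)"
    using defs[THEN conjunct2, THEN conjunct2, THEN conjunct2, THEN conjunct2] by blast
  obtain B where B: "\<And>i j z. i < 2 \<Longrightarrow> j < 2 \<Longrightarrow> norm z \<le> R + 1 \<Longrightarrow> norm z \<noteq> R \<Longrightarrow>
      norm (Y z $$ (i, j)) \<le> B"
    using good_off_circle_entries_bounded[OF good] by blast
  have "RH_solution K \<rho> R n t Y Yp Ym B \<bar>C\<bar> (max r 1 + 1)"
  proof
    show "norm ((Y z * zpow_sigma3 n (inverse z)) $$ (i, j) - (if i = j then 1 else 0)) \<le> \<bar>C\<bar> / norm z"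
      if "i < 2" "j < 2" "max r 1 + 1 \<le> norm z" for i j z
    proof -
      have "r \<le> max r 1" by simp
      then have "r < norm z" using that(3) by linarith
      then have "norm ((Y z * zpow_sigma3 n (inverse z)) $$ (i, j) - (if i = j then 1 else 0)) \<le> C / norm z"
        using Cr that(1,2) by blast
      also have "C / norm z \<le> \<bar>C\<bar> / norm z" by (intro divide_right_mono) auto
      finally show ?thesis .
    qed
    show "(\<lambda>z. Y z $$ (i, j)) holomorphic_on ball 0 R" "(\<lambda>z. Y z $$ (i, j)) holomorphic_on - cball 0 R"
      if "i < 2" "j < 2" for i j
      using good[OF that] unfolding good_off_circle_def by blast+
    show "norm (Y z $$ (i, j)) \<le> B" if "i < 2" "j < 2" "norm z \<le> R + 1" "norm z \<noteq> R" for i j z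
      using B that .
    show "((\<lambda>w. Y w $$ (i, j)) \<longlongrightarrow> Yp z $$ (i, j)) (at z within ball 0 R)"
      "((\<lambda>w. Y w $$ (i, j)) \<longlongrightarrow> Ym z $$ (i, j)) (at z within - cball 0 R)"
      if "i < 2" "j < 2" "z \<in> sphere 0 R" for i j z
      using bspec[OF boundary that(3)] that(1,2) by blast+
    show "Ym z \<in> carrier_mat 2 2" "Yp z = Ym z * jump_mat K \<rho> t z" if "z \<in> sphere 0 R" for z
      using bspec[OF boundary that] by simp_all
    show "Y z \<in> carrier_mat 2 2" for z
      using defs[THEN conjunct1] by blast
  qed (use R n in auto)
  then show ?thesis by blast
qed

context RH_solution
begin

lemma R_pos: "R > 0"
  using R by simp

lemma normalized_entries:
  assumes z: "r0 \<le> norm z"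
  shows "norm (Y z $$ (0, 0) / z ^ n - 1) \<le> C / norm z"
    and "norm (Y z $$ (0, 1) * z ^ n) \<le> C / norm z"
    and "norm (Y z $$ (1, 0) / z ^ n) \<le> C / norm z"
    and "norm (Y z $$ (1, 1) * z ^ n - 1) \<le> C / norm z"
proof -
  have Z: "zpow_sigma3 n (inverse z) \<in> carrier_mat 2 2" by (simp add: zpow_sigma3_def)
  have entry: "(Y z * zpow_sigma3 n (inverse z)) $$ (i, j)
      = (if j = 0 then Y z $$ (i, j) / z ^ n else Y z $$ (i, j) * z ^ n)" if "i < 2" "j < 2" for i j
    using that by (subst index_mult_mat_2[OF carrier Z])
      (auto simp: zpow_sigma3_def less_2_cases_iff power_inverse divide_inverse)
  show "norm (Y z $$ (0, 0) / z ^ n - 1) \<le> C / norm z"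
    and "norm (Y z $$ (0, 1) * z ^ n) \<le> C / norm z"
    and "norm (Y z $$ (1, 0) / z ^ n) \<le> C / norm z"
    and "norm (Y z $$ (1, 1) * z ^ n - 1) \<le> C / norm z"
    using normalization[OF _ _ z, of 0 0] normalization[OF _ _ z, of 0 1]
      normalization[OF _ _ z, of 1 0] normalization[OF _ _ z, of 1 1]
    by (simp_all add: entry)
qed

lemma normalized_entries_bounded:
  assumes z: "r0 \<le> norm z"
  shows "norm (Y z $$ (0, 0) / z ^ n) \<le> 1 + C" and "norm (Y z $$ (1, 0) / z ^ n) \<le> 1 + C"
    and "norm (Y z $$ (1, 1) * z ^ n) \<le> 1 + C"
proof -
  have "C / norm z \<le> C" using z r0 C by (simp add: divide_le_eq mult_le_cancel_left1)
  then show "norm (Y z $$ (0, 0) / z ^ n) \<le> 1 + C" and "norm (Y z $$ (1, 0) / z ^ n) \<le> 1 + C"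
    and "norm (Y z $$ (1, 1) * z ^ n) \<le> 1 + C"
    using normalized_entries[OF z] norm_triangle_sub[of "Y z $$ (0, 0) / z ^ n" 1]
      norm_triangle_sub[of "Y z $$ (1, 1) * z ^ n" 1] by auto
qed

lemma jump_entries:
  assumes z: "z \<in> sphere 0 R" and i: "i < 2"
  shows "Yp z $$ (i, 0) = Ym z $$ (i, 0)"
    and "Yp z $$ (i, 1) = Ym z $$ (i, 0) * weight K \<rho> t z + Ym z $$ (i, 1)"
proof -
  have J: "jump_mat K \<rho> t z \<in> carrier_mat 2 2" by (simp add: jump_mat_def)
  show "Yp z $$ (i, 0) = Ym z $$ (i, 0)"
    and "Yp z $$ (i, 1) = Ym z $$ (i, 0) * weight K \<rho> t z + Ym z $$ (i, 1)"
    unfolding jump[OF z] using i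
    by (subst index_mult_mat_2[OF Ym_carrier[OF z] J]; simp add: jump_mat_def)+
qed

text \<open>\<open>col0_poly 0\<close> and \<open>col0_poly 1\<close> are the polynomials \<open>P = Y\<^sub>1\<^sub>1\<close> and \<open>Q = Y\<^sub>2\<^sub>1\<close>.\<close>

definition col0_coeff :: "nat \<Rightarrow> nat \<Rightarrow> complex" where
  "col0_coeff i k = (deriv ^^ k) (\<lambda>z. Y z $$ (i, 0)) 0 / fact k"

definition col0_poly :: "nat \<Rightarrow> complex \<Rightarrow> complex" where
  "col0_poly i z = (\<Sum>k\<le>n. col0_coeff i k * z ^ k)"

text \<open>The first column has no jump, hence is entire, and grows at most like \<open>z\<^sup>n\<close>.\<close>

lemma col0_coeff_eq_0:
  assumes i: "i < 2" and k: "n < k"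
  shows "col0_coeff i k = 0"
  unfolding col0_coeff_def
proof (rule Taylor_coeff_eq_coeff_at_infinity
    [where g = "\<lambda>z. Yp z $$ (i, 0)" and B = B and M = "1 + C"])
  show "norm (Y z $$ (i, 0) / z ^ Suc k - 0 / z) \<le> (1 + C) / norm z ^ 2" if z: "r0 \<le> norm z" for z
  proof -
    have z1: "1 \<le> norm z" "z \<noteq> 0" using z r0 by auto
    then have "Y z $$ (i, 0) / z ^ Suc k - 0 / z = Y z $$ (i, 0) / z ^ n * z ^ n / z ^ Suc k"
      by simp
    also have "norm \<dots> \<le> (1 + C) / norm z ^ 2"
      using z1 i k normalized_entries_bounded[OF z]
      by (intro norm_mult_power_div_le[where a = 0]) (auto simp: less_2_cases_iff)
    finally show ?thesis .
  qed
  show "((\<lambda>w. Y w $$ (i, 0)) \<longlongrightarrow> Yp z $$ (i, 0)) (at z within - cball 0 R)"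
    if "z \<in> sphere 0 R" for z
    using from_outside[OF i _ that] jump_entries[OF that i] by simp
  show "(\<lambda>z. Y z $$ (i, 0)) holomorphic_on ball 0 R" "(\<lambda>z. Y z $$ (i, 0)) holomorphic_on - cball 0 R"
    using inside[OF i] outside[OF i] by simp_all
  show "norm (Y z $$ (i, 0)) \<le> B" if "norm z \<le> R + 1" "norm z \<noteq> R" for z
    using bound[OF i _ that] by simp
  show "((\<lambda>w. Y w $$ (i, 0)) \<longlongrightarrow> Yp z $$ (i, 0)) (at z within ball 0 R)" if "z \<in> sphere 0 R" for z
    using from_inside[OF i _ that] by simp
qed (rule R_pos)

lemma col0_eq_poly:
  assumes "i < 2" "z \<in> ball 0 R"
  shows "Y z $$ (i, 0) = col0_poly i z"
  unfolding col0_poly_def col0_coeff_def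
  by (rule holomorphic_eq_Taylor_polynomial[OF inside _ assms(2)])
    (use assms(1) col0_coeff_eq_0 in \<open>auto simp: col0_coeff_def\<close>)

lemma boundary_col0_eq_poly:
  assumes "i < 2" "z \<in> sphere 0 R"
  shows "Yp z $$ (i, 0) = col0_poly i z"
proof (rule boundary_value_eq[OF from_inside[OF assms(1) _ assms(2)] assms(2) R_pos])
  show "Y w $$ (i, 0) = col0_poly i w" if "w \<in> ball 0 R" for w
    by (rule col0_eq_poly[OF assms(1) that])
  show "isCont (col0_poly i) z"
    unfolding col0_poly_def by (intro continuous_intros)
qed simp

text \<open>Integrating the jump \<open>Y\<^sub>i\<^sub>2\<^sub>+ - Y\<^sub>i\<^sub>2\<^sub>- = Y\<^sub>i\<^sub>1 w\<close> against \<open>z\<^sup>k\<close> and \<open>1/z\<close>: Cauchy's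
  theorem inside and the expansion at infinity outside.\<close>

lemma col0_poly_moments:
  assumes i: "i < 2"
    and decay: "\<And>z. r0 \<le> norm z \<Longrightarrow> norm (Y z $$ (i, 1) * z ^ k - c / z) \<le> M / norm z ^ 2"
  shows "(\<Sum>l\<le>n. col0_coeff i l * moment K \<rho> R (int l + int k) t) = - 2 * pi * \<i> * c"
proof -
  have "((\<lambda>s. Yp s $$ (i, 1) * s ^ k) has_contour_integral 0) (circlepath 0 R)"
    by (rule has_contour_integral_inside_boundary_values_zero[OF inside R_pos _ from_inside,
          where B = B]) (use i bound in auto)
  moreover have "((\<lambda>s. Ym s $$ (i, 1) * s ^ k) has_contour_integral (2 * pi * \<i> * c)) (circlepath 0 R)"
  proof (rule has_contour_integral_outside_boundary_values_mult[OF outside R_pos _ from_outside _ decay,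
        where B = B])
    show "(\<lambda>s. s ^ k) holomorphic_on - {0}" by (intro holomorphic_intros)
  qed (use i bound in auto)
  ultimately have jumps: "((\<lambda>s. Yp s $$ (i, 1) * s ^ k - Ym s $$ (i, 1) * s ^ k) has_contour_integral
      (0 - 2 * pi * \<i> * c)) (circlepath 0 R)"
    by (rule has_contour_integral_diff)
  have moments: "((\<lambda>s. col0_poly i s * weight K \<rho> t s * s powi int k) has_contour_integral
      (\<Sum>l\<le>n. col0_coeff i l * moment K \<rho> R (int l + int k) t)) (circlepath 0 R)"
    unfolding col0_poly_def by (rule has_contour_integral_poly_times_weight[OF R])
  have "col0_poly i s * weight K \<rho> t s * s powi int k
      = Yp s $$ (i, 1) * s ^ k - Ym s $$ (i, 1) * s ^ k" if "s \<in> path_image (circlepath 0 R)" for s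
  proof -
    have s: "s \<in> sphere 0 R" using that R_pos by auto
    then have "Yp s $$ (i, 1) = col0_poly i s * weight K \<rho> t s + Ym s $$ (i, 1)"
      using jump_entries[OF s i] boundary_col0_eq_poly[OF i s] by simp
    then show ?thesis by (simp add: algebra_simps)
  qed
  from has_contour_integral_unique[OF has_contour_integral_eq[OF moments this] jumps]
  show ?thesis by simp
qed

lemma col0_poly_moments_minus_1:
  assumes i: "i < 2"
    and decay: "\<And>z. r0 \<le> norm z \<Longrightarrow> norm (Y z $$ (i, 1) / z) \<le> M / norm z ^ 2"
  shows "(\<Sum>l\<le>n. col0_coeff i l * moment K \<rho> R (int l - 1) t) = 2 * pi * \<i> * Y 0 $$ (i, 1)"
proof -
  have "((\<lambda>s. Yp s $$ (i, 1) / s ^ Suc 0) has_contour_integral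
      (2 * pi * \<i> / fact 0 * (deriv ^^ 0) (\<lambda>z. Y z $$ (i, 1)) 0)) (circlepath 0 R)"
    by (rule has_contour_integral_inside_boundary_values[OF inside R_pos _ from_inside,
          where B = B]) (use i bound in auto)
  moreover have "((\<lambda>s. Ym s $$ (i, 1) * (1 / s)) has_contour_integral (2 * pi * \<i> * 0)) (circlepath 0 R)"
  proof (rule has_contour_integral_outside_boundary_values_mult[OF outside R_pos _ from_outside,
        where B = B and M = M])
    show "(\<lambda>s. 1 / s) holomorphic_on - {0}" by (intro holomorphic_intros) auto
  qed (use i bound decay in auto)
  ultimately have jumps: "((\<lambda>s. Yp s $$ (i, 1) / s ^ Suc 0 - Ym s $$ (i, 1) * (1 / s))
      has_contour_integral (2 * pi * \<i> / fact 0 * (deriv ^^ 0) (\<lambda>z. Y z $$ (i, 1)) 0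
        - 2 * pi * \<i> * 0)) (circlepath 0 R)"
    by (rule has_contour_integral_diff)
  have moments: "((\<lambda>s. col0_poly i s * weight K \<rho> t s * s powi (-1)) has_contour_integral
      (\<Sum>l\<le>n. col0_coeff i l * moment K \<rho> R (int l + (-1)) t)) (circlepath 0 R)"
    unfolding col0_poly_def by (rule has_contour_integral_poly_times_weight[OF R])
  have "col0_poly i s * weight K \<rho> t s * s powi (-1)
      = Yp s $$ (i, 1) / s ^ Suc 0 - Ym s $$ (i, 1) * (1 / s)" if "s \<in> path_image (circlepath 0 R)" for s
  proof -
    have s: "s \<in> sphere 0 R" using that R_pos by auto
    then have "Yp s $$ (i, 1) = col0_poly i s * weight K \<rho> t s + Ym s $$ (i, 1)"
      using jump_entries[OF s i] boundary_col0_eq_poly[OF i s] by simp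
    then show ?thesis by (simp add: power_int_minus divide_inverse algebra_simps)
  qed
  from has_contour_integral_unique[OF has_contour_integral_eq[OF moments this] jumps]
  show ?thesis by simp
qed

lemma orthogonality_P:
  assumes "k < n"
  shows "(\<Sum>l\<le>n. col0_coeff 0 l * moment K \<rho> R (int l + int k) t) = 0"
proof -
  have "norm (Y z $$ (0, 1) * z ^ k - 0 / z) \<le> C / norm z ^ 2" if z: "r0 \<le> norm z" for z
  proof -
    have z1: "1 \<le> norm z" "z \<noteq> 0" using z r0 by auto
    then have "Y z $$ (0, 1) * z ^ k - 0 / z = Y z $$ (0, 1) * z ^ n * z ^ k / z ^ n"
      by simp
    also have "norm \<dots> \<le> C / norm z ^ 2"
      using z1 assms normalized_entries(2)[OF z] by (intro norm_mult_power_div_le[where a = 1]) auto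
    finally show ?thesis .
  qed
  then show ?thesis using col0_poly_moments[of 0 k 0 C] by simp
qed

lemma orthogonality_Q:
  assumes k: "k < n"
  shows "(\<Sum>l\<le>n. col0_coeff 1 l * moment K \<rho> R (int l + int k) t)
    = (if k = n - 1 then - 2 * pi * \<i> else 0)"
proof -
  define c :: complex where "c = (if k = n - 1 then 1 else 0)"
  have "norm (Y z $$ (1, 1) * z ^ k - c / z) \<le> (1 + C) / norm z ^ 2" if z: "r0 \<le> norm z" for z
  proof -
    have z1: "1 \<le> norm z" "z \<noteq> 0" using z r0 by auto
    show ?thesis
    proof (cases "k = n - 1")
      case True
      then have "Y z $$ (1, 1) * z ^ k - c / z = (Y z $$ (1, 1) * z ^ n - 1) * z ^ 0 / z ^ 1"
        using z1 n by (simp add: c_def power_eq_if[of z n] field_simps)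
      also have "norm \<dots> \<le> (1 + C) / norm z ^ 2"
      proof (intro norm_mult_power_div_le[where a = 1])
        have "C / norm z \<le> (1 + C) / norm z" by (intro divide_right_mono) auto
        then show "norm (Y z $$ (1, 1) * z ^ n - 1) \<le> (1 + C) / norm z ^ 1"
          using normalized_entries(4)[OF z] by simp
      qed (use z1 in auto)
      finally show ?thesis .
    next
      case False
      then have "Y z $$ (1, 1) * z ^ k - c / z = Y z $$ (1, 1) * z ^ n * z ^ k / z ^ n"
        using z1 by (simp add: c_def)
      also have "norm \<dots> \<le> (1 + C) / norm z ^ 2"
        using z1 k False normalized_entries_bounded(3)[OF z]
        by (intro norm_mult_power_div_le[where a = 0]) auto
      finally show ?thesis .
    qed
  qed
  then show ?thesis using col0_poly_moments[of 1 k c "1 + C"] by (simp add: c_def)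
qed

lemma moment_P_minus_1: "(\<Sum>l\<le>n. col0_coeff 0 l * moment K \<rho> R (int l - 1) t) = 2 * pi * \<i> * Y 0 $$ (0, 1)"
proof (rule col0_poly_moments_minus_1[where M = C])
  fix z :: complex assume z: "r0 \<le> norm z"
  have z1: "1 \<le> norm z" "z \<noteq> 0" using z r0 by auto
  then have "Y z $$ (0, 1) / z = Y z $$ (0, 1) * z ^ n * z ^ 0 / z ^ Suc n"
    by simp
  also have "norm \<dots> \<le> C / norm z ^ 2"
    using z1 normalized_entries(2)[OF z] by (intro norm_mult_power_div_le[where a = 1]) auto
  finally show "norm (Y z $$ (0, 1) / z) \<le> C / norm z ^ 2" .
qed simp

lemma moment_Q_minus_1: "(\<Sum>l\<le>n. col0_coeff 1 l * moment K \<rho> R (int l - 1) t) = 2 * pi * \<i> * Y 0 $$ (1, 1)"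
proof (rule col0_poly_moments_minus_1[where M = "1 + C"])
  fix z :: complex assume z: "r0 \<le> norm z"
  have z1: "1 \<le> norm z" "z \<noteq> 0" using z r0 by auto
  then have "Y z $$ (1, 1) / z = Y z $$ (1, 1) * z ^ n * z ^ 0 / z ^ Suc n"
    by simp
  also have "norm \<dots> \<le> (1 + C) / norm z ^ 2"
    using z1 n normalized_entries_bounded(3)[OF z] by (intro norm_mult_power_div_le[where a = 0]) auto
  finally show "norm (Y z $$ (1, 1) / z) \<le> (1 + C) / norm z ^ 2" .
qed simp

end

context RH_solution
begin

definition detY :: "complex \<Rightarrow> complex" where
  "detY z = Y z $$ (0, 0) * Y z $$ (1, 1) - Y z $$ (0, 1) * Y z $$ (1, 0)"

lemma detY_asymptotics:
  assumes z: "r0 \<le> norm z"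
  shows "norm (detY z - 1) \<le> (C * (1 + C) + C + C * C) / norm z"
proof -
  have z0: "z \<noteq> 0" "0 < norm z" using z r0 by auto
  define u0 u1 v0 v1 where "u0 = Y z $$ (0, 0) / z ^ n" and "u1 = Y z $$ (1, 1) * z ^ n"
    and "v0 = Y z $$ (0, 1) * z ^ n" and "v1 = Y z $$ (1, 0) / z ^ n"
  have eq: "detY z - 1 = (u0 - 1) * u1 + (u1 - 1) - v0 * v1"
    unfolding detY_def u0_def u1_def v0_def v1_def using z0 by (simp add: field_simps)
  have "norm (detY z - 1) \<le> norm ((u0 - 1) * u1 + (u1 - 1)) + norm (v0 * v1)"
    unfolding eq by (rule norm_triangle_ineq4)
  also have "\<dots> \<le> norm ((u0 - 1) * u1) + norm (u1 - 1) + norm (v0 * v1)"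
    by (intro add_right_mono norm_triangle_ineq)
  also have "\<dots> = norm (u0 - 1) * norm u1 + norm (u1 - 1) + norm v0 * norm v1"
    by (simp add: norm_mult)
  also have "\<dots> \<le> C / norm z * (1 + C) + C / norm z + C / norm z * C"
  proof (intro add_mono mult_mono)
    have "C / norm z \<le> C" using z r0 C by (simp add: divide_le_eq mult_le_cancel_left1)
    then show "norm v1 \<le> C" using normalized_entries(3)[OF z] by (simp add: v1_def)
  qed (use normalized_entries[OF z] normalized_entries_bounded(3)[OF z] C z0 in
      \<open>simp_all add: u0_def u1_def v0_def\<close>)
  also have "\<dots> = (C * (1 + C) + C + C * C) / norm z" using z0 by (simp add: field_simps)
  finally show ?thesis .
qed

lemma detY_bounded:
  assumes "norm z \<le> R + 1" and "norm z \<noteq> R"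
  shows "norm (detY z) \<le> B * B + B * B"
proof -
  have b: "norm (Y z $$ (i, j)) \<le> B" if "i < 2" "j < 2" for i j
    using bound that assms by blast
  have "norm (Y z $$ (0, 0)) \<le> B" by (rule b) simp_all
  then have "0 \<le> B" using norm_ge_zero[of "Y z $$ (0, 0)"] by linarith
  have "norm (detY z) \<le> norm (Y z $$ (0, 0) * Y z $$ (1, 1)) + norm (Y z $$ (0, 1) * Y z $$ (1, 0))"
    unfolding detY_def by (rule norm_triangle_ineq4)
  also have "\<dots> \<le> B * B + B * B"
    unfolding norm_mult using b \<open>0 \<le> B\<close> by (intro add_mono mult_mono) auto
  finally show ?thesis .
qed

lemma detY_Taylor_coeff:
  assumes decay: "\<And>z. r0 \<le> norm z \<Longrightarrow> norm (detY z / z ^ Suc k - c / z) \<le> M / norm z ^ 2"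
  shows "(deriv ^^ k) detY 0 / fact k = c"
proof (rule Taylor_coeff_eq_coeff_at_infinity[where B = "B * B + B * B" and
      g = "\<lambda>z. Yp z $$ (0, 0) * Yp z $$ (1, 1) - Yp z $$ (0, 1) * Yp z $$ (1, 0)"])
  show "detY holomorphic_on ball 0 R" "detY holomorphic_on - cball 0 R"
    unfolding detY_def[abs_def] by (intro holomorphic_intros inside outside; simp)+
  show "(detY \<longlongrightarrow> Yp z $$ (0, 0) * Yp z $$ (1, 1) - Yp z $$ (0, 1) * Yp z $$ (1, 0))
      (at z within ball 0 R)" if "z \<in> sphere 0 R" for z
    unfolding detY_def[abs_def] using that by (intro tendsto_intros from_inside) auto
  show "(detY \<longlongrightarrow> Yp z $$ (0, 0) * Yp z $$ (1, 1) - Yp z $$ (0, 1) * Yp z $$ (1, 0))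
      (at z within - cball 0 R)" if z: "z \<in> sphere 0 R" for z
  proof -
    have "(detY \<longlongrightarrow> Ym z $$ (0, 0) * Ym z $$ (1, 1) - Ym z $$ (0, 1) * Ym z $$ (1, 0))
        (at z within - cball 0 R)"
      unfolding detY_def[abs_def] using z by (intro tendsto_intros from_outside) auto
    moreover have "Ym z $$ (0, 0) * Ym z $$ (1, 1) - Ym z $$ (0, 1) * Ym z $$ (1, 0)
        = Yp z $$ (0, 0) * Yp z $$ (1, 1) - Yp z $$ (0, 1) * Yp z $$ (1, 0)"
      using jump_entries[OF z, of 0] jump_entries[OF z, of 1] by (simp add: algebra_simps)
    ultimately show ?thesis by simp
  qed
qed (use R_pos detY_bounded decay in auto)

lemma detY_0: "detY 0 = 1"
proof -
  define M where "M = C * (1 + C) + C + C * C"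
  have "(deriv ^^ 0) detY 0 / fact 0 = 1"
  proof (rule detY_Taylor_coeff[where M = M])
    fix z :: complex assume z: "r0 \<le> norm z"
    have z1: "1 \<le> norm z" "z \<noteq> 0" using z r0 by auto
    then have "detY z / z ^ Suc 0 - 1 / z = (detY z - 1) * z ^ 0 / z ^ 1"
      by (simp add: diff_divide_distrib)
    also have "norm \<dots> \<le> M / norm z ^ 2"
      using z1 detY_asymptotics[OF z] by (intro norm_mult_power_div_le[where a = 1]) (auto simp: M_def)
    finally show "norm (detY z / z ^ Suc 0 - 1 / z) \<le> M / norm z ^ 2" .
  qed
  then show ?thesis by simp
qed

lemma deriv_detY_0: "deriv detY 0 = 0"
proof -
  define M where "M = C * (1 + C) + C + C * C"
  have "(deriv ^^ 1) detY 0 / fact 1 = 0"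
  proof (rule detY_Taylor_coeff[where M = "1 + M"])
    fix z :: complex assume z: "r0 \<le> norm z"
    have z1: "1 \<le> norm z" "z \<noteq> 0" using z r0 by auto
    have "0 \<le> M" using C by (simp add: M_def)
    then have "M / norm z \<le> M" using z1 by (simp add: divide_le_eq mult_le_cancel_left1)
    then have "norm (detY z) \<le> 1 + M"
      using detY_asymptotics[OF z] norm_triangle_sub[of "detY z" 1] by (simp add: M_def)
    have "detY z / z ^ Suc 1 - 0 / z = detY z * z ^ 0 / z ^ 2" by (simp add: power2_eq_square)
    also have "norm \<dots> \<le> (1 + M) / norm z ^ 2"
      using z1 \<open>norm (detY z) \<le> 1 + M\<close> by (intro norm_mult_power_div_le[where a = 0]) auto
    finally show "norm (detY z / z ^ Suc 1 - 0 / z) \<le> (1 + M) / norm z ^ 2" .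
  qed
  then show ?thesis by simp
qed

lemma deriv_detY:
  "deriv detY 0 = deriv (\<lambda>z. Y z $$ (0, 0)) 0 * Y 0 $$ (1, 1) + Y 0 $$ (0, 0) * deriv (\<lambda>z. Y z $$ (1, 1)) 0
    - (deriv (\<lambda>z. Y z $$ (0, 1)) 0 * Y 0 $$ (1, 0) + Y 0 $$ (0, 1) * deriv (\<lambda>z. Y z $$ (1, 0)) 0)"
proof -
  have "((\<lambda>z. Y z $$ (i, j)) has_field_derivative deriv (\<lambda>z. Y z $$ (i, j)) 0) (at 0)"
    if "i < 2" "j < 2" for i j
    by (rule holomorphic_derivI[OF inside[OF that]]) (use R_pos in auto)
  then have "(detY has_field_derivative
      deriv (\<lambda>z. Y z $$ (0, 0)) 0 * Y 0 $$ (1, 1) + deriv (\<lambda>z. Y z $$ (1, 1)) 0 * Y 0 $$ (0, 0)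
      - (deriv (\<lambda>z. Y z $$ (0, 1)) 0 * Y 0 $$ (1, 0) + deriv (\<lambda>z. Y z $$ (1, 0)) 0 * Y 0 $$ (0, 1)))
      (at 0)"
    unfolding detY_def[abs_def] by (intro DERIV_diff DERIV_mult) auto
  then show ?thesis by (simp add: DERIV_imp_deriv algebra_simps)
qed

lemma logarithmic_derivative_tau:
  assumes Y0i: "Y0i \<in> carrier_mat 2 2" "Y0i * Y 0 = 1\<^sub>m 2"
  defines "M \<equiv> Y0i * mat 2 2 (\<lambda>(i, j). deriv (\<lambda>z. Y z $$ (i, j)) 0)"
  shows "M $$ (1, 1) = - M $$ (0, 0)" and "deriv (tau K \<rho> R n) t = - M $$ (0, 0) * tau K \<rho> R n t"
proof -
  let ?D = "\<lambda>i j. deriv (\<lambda>z. Y z $$ (i, j)) 0"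
  define A where "A = Y 0"
  have det_A: "A $$ (0, 0) * A $$ (1, 1) - A $$ (0, 1) * A $$ (1, 0) = 1"
    using detY_0 by (simp add: detY_def A_def)
  have D: "mat 2 2 (\<lambda>(i, j). ?D i j) \<in> carrier_mat 2 2" by simp
  note Y0i_eq = left_inverse_mat_2[OF carrier Y0i det_A[unfolded A_def]]
  have M00: "M $$ (0, 0) = A $$ (1, 1) * ?D 0 0 - A $$ (0, 1) * ?D 1 0"
    and M11: "M $$ (1, 1) = A $$ (0, 0) * ?D 1 1 - A $$ (1, 0) * ?D 0 1"
    unfolding M_def by (subst index_mult_mat_2[OF Y0i(1) D]; simp add: Y0i_eq A_def)+
  show "M $$ (1, 1) = - M $$ (0, 0)"
    using deriv_detY_0 unfolding deriv_detY M00 M11 A_def by (simp add: algebra_simps)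
  have "deriv (tau K \<rho> R n) t = det (mat n n (\<lambda>(i, j).
      if i = 0 then moment K \<rho> R (int j - 1) t else moment K \<rho> R (int (i + j)) t))"
    by (rule deriv_tau[OF R n])
  also have "\<dots> = - (A $$ (1, 1) * col0_coeff 0 1 - A $$ (0, 1) * col0_coeff 1 1)
      * det (mat n n (\<lambda>(i, j). moment K \<rho> R (int (i + j)) t))"
  proof (rule hankel_det_first_row_shift[OF n, where c = "2 * pi * \<i>" and N = "\<lambda>l. moment K \<rho> R l t"
        and a = "col0_coeff 0" and d = "col0_coeff 1" and ya = "A $$ (0, 1)" and yd = "A $$ (1, 1)"])
    show "(\<Sum>i\<le>n. col0_coeff 1 i * moment K \<rho> R (int i + int k) t)
        = (if k = n - 1 then - (2 * pi * \<i>) else 0)" if "k < n" for k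
      using orthogonality_Q[OF that] by simp
    show "col0_coeff 0 0 * A $$ (1, 1) - A $$ (0, 1) * col0_coeff 1 0 = 1"
      using det_A by (simp add: col0_coeff_def A_def algebra_simps)
  qed (use orthogonality_P moment_P_minus_1 moment_Q_minus_1 in \<open>simp_all add: A_def\<close>)
  finally show "deriv (tau K \<rho> R n) t = - M $$ (0, 0) * tau K \<rho> R n t"
    by (simp add: M00 tau_eq_det_moment col0_coeff_def)
qed

end

theorem mainTheorem1:
  fixes n :: nat and K :: int and \<rho> :: complex and R :: real
  assumes "n \<ge> 1" and "R > 1"
  shows "(\<exists>p :: complex poly. \<forall>t. tau K \<rho> R n t = poly p t) \<and>
    (\<forall>t Y. tau K \<rho> R n t \<noteq> 0 \<longrightarrow> RHP_solution K \<rho> R n t Y \<longrightarrow>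
       (\<forall>Y0i \<in> carrier_mat 2 2. Y0i * Y 0 = 1\<^sub>m 2 \<longrightarrow>
          (let M = Y0i * mat 2 2 (\<lambda>(i, j). deriv (\<lambda>z. Y z $$ (i, j)) 0) in
             - (1/2) * mat_trace (M * sigma3) + \<rho> / 2 = - (M $$ (0, 0)) + \<rho> / 2 \<and>
             - (M $$ (0, 0)) + \<rho> / 2 = deriv (tau K \<rho> R n) t / tau K \<rho> R n t + \<rho> / 2)))"
proof (intro conjI allI impI ballI)
  show "\<exists>p. \<forall>t. tau K \<rho> R n t = poly p t" by (rule tau_poly[OF assms(2)])
  fix t Y Y0i
  assume tau: "tau K \<rho> R n t \<noteq> 0" and "RHP_solution K \<rho> R n t Y"
    and Y0i: "Y0i \<in> carrier_mat 2 2" "Y0i * Y 0 = 1\<^sub>m 2"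
  then obtain Yp Ym B C r0 where "RH_solution K \<rho> R n t Y Yp Ym B C r0"
    using RHP_solution_imp_RH_solution assms by blast
  then interpret RH_solution K \<rho> R n t Y Yp Ym B C r0 .
  define M where "M = Y0i * mat 2 2 (\<lambda>(i, j). deriv (\<lambda>z. Y z $$ (i, j)) 0)"
  have "M \<in> carrier_mat 2 2" using Y0i(1) by (simp add: M_def)
  then have "mat_trace (M * sigma3) = 2 * M $$ (0, 0)"
    using logarithmic_derivative_tau(1)[OF Y0i] by (simp add: mat_trace_mult_sigma3 M_def)
  moreover have "deriv (tau K \<rho> R n) t / tau K \<rho> R n t = - M $$ (0, 0)"
    using logarithmic_derivative_tau(2)[OF Y0i] tau by (simp add: M_def)
  ultimately show "let M = Y0i * mat 2 2 (\<lambda>(i, j). deriv (\<lambda>z. Y z $$ (i, j)) 0) in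
      - (1/2) * mat_trace (M * sigma3) + \<rho> / 2 = - (M $$ (0, 0)) + \<rho> / 2 \<and>
      - (M $$ (0, 0)) + \<rho> / 2 = deriv (tau K \<rho> R n) t / tau K \<rho> R n t + \<rho> / 2"
    unfolding Let_def M_def[symmetric] by simp
qed

end
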